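(* Consider $L$ receivers $i=1,\dots,L$, each with a reference measurement vector $\mathbf{r}_i\in\mathbb{C}^N$ and a surveillance measurement vector $\mathbf{s}_i\in\mathbb{C}^N$, under two hypotheses: $$\mathcal{H}_1:\ \mathbf{r}_i=\beta_i\mathbf{x}+\boldsymbol{\delta}_{r,i},\quad \mathbf{s}_i=\alpha_i\mathbf{x}+\boldsymbol{\delta}_{s,i};\qquad \mathcal{H}_0:\ \mathbf{r}_i=\beta_i\mathbf{x}+\boldsymbol{\delta}_{r,i},\quad \mathbf{s}_i=\boldsymbol{\delta}_{s,i}.$$ Here $\mathbf{U}_D\in\mathbb{C}^{N\times D}$ has full column rank, $\mathbf{x}=\mathbf{U}_D\boldsymbol{\theta}_D\sim\mathcal{CN}(\mathbf{0},\mathbf{U}_D\boldsymbol{\Sigma}_{\theta}\mathbf{U}_D^{\mathsf H})$ with $\boldsymbol{\Sigma}_\theta=\mathrm{Cov}(\boldsymbol{\theta}_D)$; $\alpha_i\sim\mathcal{CN}(0,\sigma_\alpha^2)$; $\beta_i\sim\mathcal{CN}(\mu_\beta,\sigma_\beta^2)$; $\boldsymbol{\delta}_{r,i}\sim\mathcal{CN}(\mathbf{0},\boldsymbol{\Sigma}_r)$, $\boldsymbol{\delta}_{s,i}\sim\mathcal{CN}(\mathbf{0},\boldsymbol{\Sigma}_s)$ with $\boldsymbol{\Sigma}_r,\boldsymbol{\Sigma}_s$ Hermitian positive definite; and $\mathbf{x}$, all $\alpha_i$, all $\beta_i$, all $\boldsymbol{\delta}_{r,i}$ and all $\boldsymbol{\delta}_{s,i}$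 ($i=1,\dots,L$) are mutually independent. Define $$\mathbf{C}_r=(\mathbf{U}_D^{\mathsf H}\boldsymbol{\Sigma}_r^{-1}\mathbf{U}_D)^{-1},\quad \mathbf{C}_s=(\mathbf{U}_D^{\mathsf H}\boldsymbol{\Sigma}_s^{-1}\mathbf{U}_D)^{-1},\quad \mathbf{T}_r=\mathbf{C}_r\mathbf{U}_D^{\mathsf H}\boldsymbol{\Sigma}_r^{-1/2},\quad \mathbf{T}_s=\mathbf{C}_s\mathbf{U}_D^{\mathsf H}\boldsymbol{\Sigma}_s^{-1/2},$$ $$\mathbf{M}_{\mathbf U}=\mathbf{U}_D^{\mathsf H}\boldsymbol{\Sigma}_r^{-1/2}\boldsymbol{\Sigma}_s^{-1/2}\mathbf{U}_D,\quad \tilde{\mathbf r}_i=\mathbf{T}_r\boldsymbol{\Sigma}_r^{-1/2}\mathbf{r}_i,\quad \tilde{\mathbf s}_i=\mathbf{T}_s\boldsymbol{\Sigma}_s^{-1/2}\mathbf{s}_i,\quad c_i=\tilde{\mathbf r}_i^{\mathsf H}\mathbf{M}_{\mathbf U}\tilde{\mathbf s}_i.$$ Then, writing $\mathrm{Var}(c)=\mathbb{E}|c-\mathbb{E}c|^2$ and $\mathrm{Cov}(c,c')=\mathbb{E}[(c-\mathbb{E}c)(c'-\mathbb{E}c')^*]$, $$\sigma_{c,0}^2:=\mathrm{Var}(c_i\mid\mathcal{H}_0)=(|\mu_\beta|^2+\sigma_\beta^2)\,\mathrm{tr}(\mathbf{M}_{\mathbf U}\mathbf{C}_s\mathbf{M}_{\mathbf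 U}^{\mathsf H}\boldsymbol{\Sigma}_\theta)+\mathrm{tr}(\mathbf{M}_{\mathbf U}\mathbf{C}_s\mathbf{M}_{\mathbf U}^{\mathsf H}\mathbf{C}_r),$$ $$\sigma_{c,1}^2:=\mathrm{Var}(c_i\mid\mathcal{H}_1)=\sigma_{c,0}^2+\sigma_\alpha^2\,\mathrm{tr}(\mathbf{M}_{\mathbf U}^{\mathsf H}\mathbf{C}_r\mathbf{M}_{\mathbf U}\boldsymbol{\Sigma}_\theta)+\sigma_\alpha^2(|\mu_\beta|^2+\sigma_\beta^2)\Big(\mathrm{tr}(\mathbf{M}_{\mathbf U}\boldsymbol{\Sigma}_\theta\mathbf{M}_{\mathbf U}^{\mathsf H}\boldsymbol{\Sigma}_\theta)+|\mathrm{tr}(\mathbf{M}_{\mathbf U}\boldsymbol{\Sigma}_\theta)|^2\Big),$$ and $\mathrm{Cov}(c_i,c_j\mid\mathcal{H}_\ell)=0$ for $\ell\in\{0,1\}$ and all $i\neq j$.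
   Context: $\mathcal{CN}(\mathbf{m},\boldsymbol{\Sigma})$ denotes the proper (circularly symmetric about its mean) complex Gaussian distribution with mean $\mathbf m$ and covariance $\boldsymbol\Sigma$. $\boldsymbol{\Sigma}^{-1/2}$ denotes the inverse of the Hermitian positive definite square root of $\boldsymbol\Sigma$. $(\cdot)^{\mathsf H}$ is conjugate transpose, $(\cdot)^*$ complex conjugate, $\mathrm{tr}$ the trace. Conditioning on $\mathcal{H}_\ell$ means the measurements are generated by the model of hypothesis $\mathcal{H}_\ell$. In the paper $\mathbf{x}=\mathbf{U}_D\boldsymbol\theta_D$ (a waveform in a known $D$-dimensional subspace, with $\boldsymbol\theta_D$ zero-mean with covariance $\boldsymbol\Sigma_\theta$) is approximated as complex Gaussian for the purposes of this result. *)

theory Defs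
  imports "HOL-Probability.Probability"
begin

section \<open>Complex matrix notions (matrices as complex^'c^'r, i.e. rows indexed by 'r)\<close>

definition cinner :: "complex^'n \<Rightarrow> complex^'n \<Rightarrow> complex" where
  "cinner a z = (\<Sum>k\<in>UNIV. cnj (a$k) * z$k)"

definition adjoint_mat :: "complex^'c^'r \<Rightarrow> complex^'r^'c" where
  "adjoint_mat A = (\<chi> i j. cnj (A$j$i))"

definition hermitian :: "complex^'n^'n \<Rightarrow> bool" where
  "hermitian A \<longleftrightarrow> adjoint_mat A = A"

definition pos_def :: "complex^'n^'n \<Rightarrow> bool" where
  "pos_def A \<longleftrightarrow> hermitian A \<and> (\<forall>v. v \<noteq> 0 \<longrightarrow> Re (cinner v (A *v v)) > 0)"

definition pos_semidef :: "complex^'n^'n \<Rightarrow> bool" where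
  "pos_semidef A \<longleftrightarrow> hermitian A \<and> (\<forall>v. Re (cinner v (A *v v)) \<ge> 0)"

definition sqrt_mat :: "complex^'n^'n \<Rightarrow> complex^'n^'n" where
  "sqrt_mat A = (THE B. pos_def B \<and> B ** B = A)"

definition inv_sqrt_mat :: "complex^'n^'n \<Rightarrow> complex^'n^'n" where
  "inv_sqrt_mat A = matrix_inv (sqrt_mat A)"

definition full_column_rank :: "complex^'d^'n \<Rightarrow> bool" where
  "full_column_rank U \<longleftrightarrow> (\<forall>v. U *v v = 0 \<longrightarrow> v = 0)"

definition real_normal :: "real \<Rightarrow> real \<Rightarrow> real measure" where
  "real_normal m v = (if v = 0 then return borel m
                      else density lborel (normal_density m (sqrt v)))"

text \<open>Z ~ CN(m, S): Z is measurable and, for every a, Re(a^H Z) ~ N(Re(a^H m), a^H S a / 2).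
  (Cramer-Wold characterisation of the proper complex Gaussian law.)\<close>
definition is_CN :: "'w measure \<Rightarrow> ('w \<Rightarrow> complex^'n) \<Rightarrow> complex^'n \<Rightarrow> complex^'n^'n \<Rightarrow> bool" where
  "is_CN M Z m S \<longleftrightarrow> Z \<in> borel_measurable M \<and>
     (\<forall>a. distr M borel (\<lambda>w. Re (cinner a (Z w)))
            = real_normal (Re (cinner a m)) (Re (cinner a (S *v a)) / 2))"

definition is_CN1 :: "'w measure \<Rightarrow> ('w \<Rightarrow> complex) \<Rightarrow> complex \<Rightarrow> real \<Rightarrow> bool" where
  "is_CN1 M z m v \<longleftrightarrow> z \<in> borel_measurable M \<and>
     (\<forall>a. distr M borel (\<lambda>w. Re (cnj a * z w))
            = real_normal (Re (cnj a * m)) ((cmod a)\<^sup>2 * v / 2))"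

definition cvar :: "'w measure \<Rightarrow> ('w \<Rightarrow> complex) \<Rightarrow> real" where
  "cvar M X = (\<integral>w. (cmod (X w - (\<integral>u. X u \<partial>M)))\<^sup>2 \<partial>M)"

definition ccov :: "'w measure \<Rightarrow> ('w \<Rightarrow> complex) \<Rightarrow> ('w \<Rightarrow> complex) \<Rightarrow> complex" where
  "ccov M X Y = (\<integral>w. (X w - (\<integral>u. X u \<partial>M)) * cnj (Y w - (\<integral>u. Y u \<partial>M)) \<partial>M)"

datatype rv_idx = IX | IAlpha nat | IBeta nat | IDr nat | IDs nat

definition gen_events :: "'w measure \<Rightarrow> ('w \<Rightarrow> 'b::topological_space) \<Rightarrow> 'w set set" where
  "gen_events M X = {X -` A \<inter> space M | A. A \<in> sets borel}"

definition model_indep ::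
  "'w measure \<Rightarrow> nat \<Rightarrow> ('w \<Rightarrow> complex^'n) \<Rightarrow> (nat \<Rightarrow> 'w \<Rightarrow> complex) \<Rightarrow> (nat \<Rightarrow> 'w \<Rightarrow> complex)
     \<Rightarrow> (nat \<Rightarrow> 'w \<Rightarrow> complex^'n) \<Rightarrow> (nat \<Rightarrow> 'w \<Rightarrow> complex^'n) \<Rightarrow> bool" where
  "model_indep M L x al be dr ds \<longleftrightarrow>
     prob_space.indep_sets M
       (\<lambda>k. case k of IX \<Rightarrow> gen_events M x
                    | IAlpha i \<Rightarrow> gen_events M (al i)
                    | IBeta i \<Rightarrow> gen_events M (be i)
                    | IDr i \<Rightarrow> gen_events M (dr i)
                    | IDs i \<Rightarrow> gen_events M (ds i))
       ({IX} \<union> IAlpha ` {..<L} \<union> IBeta ` {..<L} \<union> IDr ` {..<L} \<union> IDs ` {..<L})"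

definition C_mat :: "complex^'d^'n \<Rightarrow> complex^'n^'n \<Rightarrow> complex^'d^'d" where
  "C_mat U S = matrix_inv (adjoint_mat U ** matrix_inv S ** U)"

definition T_mat :: "complex^'d^'n \<Rightarrow> complex^'n^'n \<Rightarrow> complex^'n^'d" where
  "T_mat U S = C_mat U S ** adjoint_mat U ** inv_sqrt_mat S"

definition M_U :: "complex^'d^'n \<Rightarrow> complex^'n^'n \<Rightarrow> complex^'n^'n \<Rightarrow> complex^'d^'d" where
  "M_U U Sr Ss = adjoint_mat U ** inv_sqrt_mat Sr ** inv_sqrt_mat Ss ** U"

definition c_stat :: "complex^'d^'n \<Rightarrow> complex^'n^'n \<Rightarrow> complex^'n^'n \<Rightarrow> complex^'n \<Rightarrow> complex^'n \<Rightarrow> complex" where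
  "c_stat U Sr Ss r s =
     cinner (T_mat U Sr *v (inv_sqrt_mat Sr *v r)) (M_U U Sr Ss *v (T_mat U Ss *v (inv_sqrt_mat Ss *v s)))"

text \<open>Measurements; the flag h selects the hypothesis (True = H1, False = H0).\<close>
definition meas_r :: "('w \<Rightarrow> complex^'n) \<Rightarrow> (nat \<Rightarrow> 'w \<Rightarrow> complex) \<Rightarrow> (nat \<Rightarrow> 'w \<Rightarrow> complex^'n)
     \<Rightarrow> nat \<Rightarrow> 'w \<Rightarrow> complex^'n" where
  "meas_r x be dr i w = be i w *s x w + dr i w"

definition meas_s :: "bool \<Rightarrow> ('w \<Rightarrow> complex^'n) \<Rightarrow> (nat \<Rightarrow> 'w \<Rightarrow> complex) \<Rightarrow> (nat \<Rightarrow> 'w \<Rightarrow> complex^'n)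
     \<Rightarrow> nat \<Rightarrow> 'w \<Rightarrow> complex^'n" where
  "meas_s h x al ds i w = (if h then al i w *s x w + ds i w else ds i w)"

end

theory Submission
  imports Defs
begin

text \<open>
  Write \<open>P\<^sub>r = C\<^sub>r U\<^sup>H \<Sigma>\<^sub>r\<^sup>-\<^sup>1\<close> and \<open>Q = M\<^sub>U C\<^sub>s U\<^sup>H \<Sigma>\<^sub>s\<^sup>-\<^sup>1\<close> (the square roots of \<open>\<Sigma>\<close> cancel), so that
  \<open>c\<^sub>i = (P\<^sub>r r\<^sub>i)\<^sup>H (Q s\<^sub>i)\<close>. Both estimators are left inverses of \<open>U\<close>, so they map \<open>x\<close> to a vector
  with covariance \<open>\<Sigma>\<^sub>\<theta>\<close>, and the noise to vectors with covariances \<open>C\<^sub>r\<close>, \<open>C\<^sub>s\<close>.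
  Expanding the measurements gives \<open>c\<^sub>i = \<alpha>\<^sub>i (\<beta>\<^sub>i\<^sup>* T\<^sub>x\<^sub>x + T\<^sub>r\<^sub>x) + \<beta>\<^sub>i\<^sup>* T\<^sub>x\<^sub>s + T\<^sub>r\<^sub>s\<close> with four sesquilinear
  forms \<open>T\<close>. Every cross term contains a centred factor (\<open>\<alpha>\<^sub>i\<close>, \<open>\<delta>\<^sub>r\<^sub>,\<^sub>i\<close> or \<open>\<delta>\<^sub>s\<^sub>,\<^sub>i\<close>) independent of
  the rest, so the mean, the cross terms of the variance and all covariances between receivers
  vanish. The second moments of the \<open>T\<close> are traces; for \<open>T\<^sub>x\<^sub>x\<close>, a quartic form in the single
  Gaussian \<open>x\<close>, Isserlis' theorem for circular Gaussians adds the term \<open>|tr(M\<^sub>U \<Sigma>\<^sub>\<theta>)|\<^sup>2\<close>.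
\<close>

section \<open>Hermitian matrices and positive definite square roots\<close>

lemma cinner_add_left: "cinner (a + b) z = cinner a z + cinner b z"
  by (simp add: cinner_def sum.distrib distrib_right)

lemma cinner_add_right: "cinner a (y + z) = cinner a y + cinner a z"
  by (simp add: cinner_def sum.distrib distrib_left)

lemma cinner_diff_left: "cinner (a - b) z = cinner a z - cinner b z"
  by (simp add: cinner_def sum_subtractf left_diff_distrib)

lemma cinner_diff_right: "cinner a (y - z) = cinner a y - cinner a z"
  by (simp add: cinner_def sum_subtractf right_diff_distrib)

lemma cinner_scale_left: "cinner (c *s a) z = cnj c * cinner a z"
  by (simp add: cinner_def sum_distrib_left mult_ac)

lemma cinner_scale_right: "cinner a (c *s z) = c * cinner a z"
  by (simp add: cinner_def sum_distrib_left mult_ac)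

lemma cinner_zero_right [simp]: "cinner a 0 = 0"
  by (simp add: cinner_def)

lemma cinner_sum_right: "cinner a (\<Sum>i\<in>S. f i) = (\<Sum>i\<in>S. cinner a (f i))"
  by (induction S rule: infinite_finite_induct) (auto simp: cinner_add_right)

lemma cnj_cinner: "cnj (cinner a z) = cinner z a"
  by (simp add: cinner_def mult.commute)

lemma cinner_self: "cinner v v = complex_of_real ((norm v)\<^sup>2)"
proof -
  have "cinner v v = (\<Sum>k\<in>UNIV. complex_of_real ((cmod (v$k))\<^sup>2))"
    unfolding cinner_def by (intro sum.cong refl) (metis complex_norm_square mult.commute)
  also have "\<dots> = complex_of_real ((norm v)\<^sup>2)"
    by (simp add: norm_vec_def L2_set_def sum_nonneg)
  finally show ?thesis .
qed

lemma cinner_self_eq_0 [simp]: "cinner v v = 0 \<longleftrightarrow> v = 0"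
  by (simp add: cinner_self)

lemma cinner_eq_0_sym: "cinner a b = 0 \<longleftrightarrow> cinner b a = 0"
  by (metis cnj_cinner complex_cnj_zero_iff)

lemma mult_cnj_self: "z * cnj z = complex_of_real ((cmod z)\<^sup>2)"
  by (metis complex_norm_square of_real_power)

lemma adjoint_adjoint_mat [simp]: "adjoint_mat (adjoint_mat A) = A"
  by (simp add: adjoint_mat_def vec_eq_iff)

lemma adjoint_mat_one [simp]: "adjoint_mat (mat 1) = (mat 1 :: complex^'n^'n)"
  by (simp add: adjoint_mat_def vec_eq_iff mat_def)

lemma adjoint_mat_mult: "adjoint_mat (A ** B) = adjoint_mat B ** adjoint_mat A"
  by (simp add: vec_eq_iff matrix_matrix_mult_def adjoint_mat_def mult.commute)

lemma trace_adjoint_mat: "trace (adjoint_mat A) = cnj (trace A)"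
  by (simp add: trace_def adjoint_mat_def)

lemma cinner_adjoint_left: "cinner (A *v u) v = cinner u (adjoint_mat A *v v)"
proof -
  have "cinner (A *v u) v = (\<Sum>k\<in>UNIV. \<Sum>j\<in>UNIV. cnj (A$k$j) * cnj (u$j) * v$k)"
    by (simp add: cinner_def matrix_vector_mult_def sum_distrib_right)
  also have "\<dots> = (\<Sum>j\<in>UNIV. \<Sum>k\<in>UNIV. cnj (A$k$j) * cnj (u$j) * v$k)"
    by (rule sum.swap)
  also have "\<dots> = cinner u (adjoint_mat A *v v)"
    by (simp add: cinner_def matrix_vector_mult_def sum_distrib_left adjoint_mat_def mult_ac)
  finally show ?thesis .
qed

lemma cinner_adjoint_right: "cinner u (A *v v) = cinner (adjoint_mat A *v u) v"
  by (simp add: cinner_adjoint_left adjoint_mat_def vec_eq_iff)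

lemma hermitian_cinner: "hermitian A \<Longrightarrow> cinner (A *v u) v = cinner u (A *v v)"
  by (simp add: hermitian_def cinner_adjoint_left)

lemma hermitian_cinner_swap: "hermitian A \<Longrightarrow> cinner b (A *v a) = cnj (cinner a (A *v b))"
  by (simp add: cnj_cinner hermitian_cinner)

lemma hermitian_cinner_real:
  assumes "hermitian A"
  shows "cinner v (A *v v) = complex_of_real (Re (cinner v (A *v v)))"
proof -
  have "cnj (cinner v (A *v v)) = cinner v (A *v v)"
    using hermitian_cinner_swap[OF assms, of v v] by simp
  thus ?thesis by (simp add: complex_eq_iff)
qed

lemma matrix_inv_right: "invertible A \<Longrightarrow> A ** matrix_inv A = mat 1"
  and matrix_inv_left: "invertible A \<Longrightarrow> matrix_inv A ** A = mat 1"
  for A :: "'a::field^'n^'n"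
  unfolding invertible_def matrix_inv_def by (metis (mono_tags, lifting) someI_ex)+

lemma matrix_inv_eqI:
  fixes A :: "'a::field^'n^'n"
  assumes "A ** B = mat 1"
  shows "matrix_inv A = B"
proof -
  have inv: "invertible A" using assms invertible_right_inverse by blast
  have "matrix_inv A = matrix_inv A ** (A ** B)" using assms by simp
  also have "\<dots> = B" by (simp add: matrix_mul_assoc matrix_inv_left[OF inv])
  finally show ?thesis .
qed

lemma hermitian_matrix_inv:
  assumes "hermitian S" "invertible S"
  shows "hermitian (matrix_inv S)"
proof -
  have "adjoint_mat (matrix_inv S) ** S = mat 1"
    using assms matrix_inv_right[OF assms(2)] adjoint_mat_mult[of S "matrix_inv S"]
    by (simp add: hermitian_def)
  hence "S ** adjoint_mat (matrix_inv S) = mat 1" using matrix_left_right_inverse by blast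
  hence "matrix_inv S = adjoint_mat (matrix_inv S)" by (rule matrix_inv_eqI)
  thus ?thesis by (simp add: hermitian_def)
qed

lemma pos_def_kernel: "pos_def A \<Longrightarrow> A *v v = 0 \<Longrightarrow> v = 0"
  unfolding pos_def_def by (metis cinner_zero_right less_irrefl zero_complex.sel(1))

lemma pos_def_invertible: "pos_def A \<Longrightarrow> invertible A"
  by (metis pos_def_kernel matrix_left_invertible_ker invertible_left_inverse)

lemma pos_def_cinner_nonneg: "pos_def S \<Longrightarrow> Re (cinner a (S *v a)) \<ge> 0"
  by (cases "a = 0") (auto simp: pos_def_def less_imp_le)

lemma pos_def_matrix_inv:
  assumes pd: "pos_def S"
  shows "pos_def (matrix_inv S)"
proof -
  have inv: "invertible S" using pos_def_invertible[OF pd] .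
  have h: "hermitian S" using pd by (simp add: pos_def_def)
  have "Re (cinner v (matrix_inv S *v v)) > 0" if "v \<noteq> 0" for v
  proof -
    define u where "u = matrix_inv S *v v"
    have Su: "S *v u = v" by (simp add: u_def matrix_vector_mul_assoc matrix_inv_right[OF inv])
    have "u \<noteq> 0" using Su that by auto
    hence "Re (cinner u (S *v u)) > 0" using pd by (simp add: pos_def_def)
    moreover have "cinner v (matrix_inv S *v v) = cinner (S *v u) u" by (simp add: Su u_def[symmetric])
    moreover have "cinner (S *v u) u = cinner u (S *v u)" by (rule hermitian_cinner[OF h])
    ultimately show ?thesis by simp
  qed
  thus ?thesis using hermitian_matrix_inv[OF h inv] by (simp add: pos_def_def)
qed

lemma pos_def_congruence:
  fixes U :: "complex^'d^'n"
  assumes pd: "pos_def S" and fcr: "full_column_rank U"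
  shows "pos_def (adjoint_mat U ** S ** U)"
proof -
  have "hermitian (adjoint_mat U ** S ** U)"
    using pd by (simp add: pos_def_def hermitian_def adjoint_mat_mult matrix_mul_assoc)
  moreover have "Re (cinner v ((adjoint_mat U ** S ** U) *v v)) > 0" if "v \<noteq> 0" for v
  proof -
    have "U *v v \<noteq> 0" using fcr that by (auto simp: full_column_rank_def)
    hence "Re (cinner (U *v v) (S *v (U *v v))) > 0" using pd by (simp add: pos_def_def)
    moreover have "cinner v ((adjoint_mat U ** S ** U) *v v) = cinner (U *v v) (S *v (U *v v))"
      by (simp add: matrix_vector_mul_assoc[symmetric] cinner_adjoint_right)
    ultimately show ?thesis by simp
  qed
  ultimately show ?thesis by (simp add: pos_def_def)
qed

definition orthonormal_on :: "(nat \<Rightarrow> complex^'n) \<Rightarrow> nat \<Rightarrow> bool" where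
  "orthonormal_on f m \<longleftrightarrow> (\<forall>i<m. \<forall>j<m. cinner (f i) (f j) = (if i = j then 1 else 0))"

lemma orthonormal_on_cinner_sum:
  assumes "orthonormal_on f m" "j < m"
  shows "cinner (f j) (\<Sum>i<m. c i *s f i) = c j"
proof -
  have "cinner (f j) (\<Sum>i<m. c i *s f i) = (\<Sum>i<m. c i * (if j = i then 1 else 0))"
    using assms unfolding orthonormal_on_def by (simp add: cinner_sum_right cinner_scale_right)
  also have "\<dots> = c j" using assms(2) by (simp add: if_distrib cong: if_cong)
  finally show ?thesis .
qed

lemma orthonormal_on_residual:
  assumes "orthonormal_on f m" "j < m"
  shows "cinner (f j) (v - (\<Sum>i<m. cinner (f i) v *s f i)) = 0"
  using orthonormal_on_cinner_sum[OF assms] by (simp add: cinner_diff_right)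

lemma orthonormal_on_extend:
  assumes "orthonormal_on f m" "cinner w w = 1" "\<And>i. i < m \<Longrightarrow> cinner (f i) w = 0"
  shows "orthonormal_on (f(m := w)) (Suc m)"
  using assms unfolding orthonormal_on_def by (auto simp: less_Suc_eq cinner_eq_0_sym)

lemma orthonormal_on_card_le:
  fixes f :: "nat \<Rightarrow> complex^'n"
  assumes "orthonormal_on f m"
  shows "m \<le> CARD('n)"
proof -
  have inj: "inj_on f {..<m}"
    using assms unfolding orthonormal_on_def inj_on_def by (metis lessThan_iff one_neq_zero)
  have "vec.independent (f ` {..<m})"
  proof (rule vec.independent_if_scalars_zero)
    fix g x assume s: "(\<Sum>y\<in>f ` {..<m}. g y *s y) = 0" and "x \<in> f ` {..<m}"
    then obtain j where j: "j < m" "x = f j" by auto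
    have "0 = cinner (f j) (\<Sum>i<m. g (f i) *s f i)"
      using s by (simp add: sum.reindex[OF inj])
    also have "\<dots> = g x" using orthonormal_on_cinner_sum[OF assms j(1)] j(2) by simp
    finally show "g x = 0" by simp
  qed simp
  hence "card (f ` {..<m}) \<le> vec.dim (UNIV :: (complex^'n) set)"
    by (intro vec.independent_card_le_dim) auto
  thus ?thesis by (metis vec_dim_card card_image[OF inj] card_lessThan)
qed

lemma exists_unit_orthogonal:
  assumes "w \<noteq> 0" "\<And>i. i < m \<Longrightarrow> cinner (f i) w = 0"
  shows "\<exists>u. cinner u u = 1 \<and> (\<forall>i<m. cinner (f i) u = 0)"
proof -
  define u where "u = complex_of_real (1 / norm w) *s w"
  have "cinner u u = complex_of_real (1 / norm w) * complex_of_real (1 / norm w) * cinner w w"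
    by (simp add: u_def cinner_scale_left cinner_scale_right)
  also have "\<dots> = 1" using assms(1) by (simp add: cinner_self power2_eq_square field_simps)
  finally have "cinner u u = 1" .
  moreover have "\<forall>i<m. cinner (f i) u = 0" using assms(2) by (simp add: u_def cinner_scale_right)
  ultimately show ?thesis by blast
qed

lemma orthonormal_on_exists_orthogonal_unit:
  fixes f :: "nat \<Rightarrow> complex^'n"
  assumes ON: "orthonormal_on f m" and m: "m < CARD('n)"
  shows "\<exists>w. cinner w w = 1 \<and> (\<forall>i<m. cinner (f i) w = 0)"
proof (rule ccontr)
  assume none: "\<not> ?thesis"
  have "v \<in> vec.span (f ` {..<m})" for v
  proof -
    define w where "w = v - (\<Sum>i<m. cinner (f i) v *s f i)"
    have "cinner (f i) w = 0" if "i < m" for i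
      using orthonormal_on_residual[OF ON that] by (simp add: w_def)
    hence "w = 0" using exists_unit_orthogonal[of w m f] none by blast
    hence "v = (\<Sum>i<m. cinner (f i) v *s f i)" by (simp add: w_def)
    also have "\<dots> \<in> vec.span (f ` {..<m})"
      by (intro vec.span_sum vec.span_scale vec.span_base) auto
    finally show ?thesis .
  qed
  hence "vec.dim (UNIV :: (complex^'n) set) \<le> card (f ` {..<m})"
    by (intro vec.dim_le_card) auto
  also have "\<dots> \<le> m" using card_image_le[of "{..<m}" f] by simp
  finally show False using m by (metis vec_dim_card not_le)
qed

lemma orthonormal_on_expansion:
  fixes f :: "nat \<Rightarrow> complex^'n"
  assumes ON: "orthonormal_on f CARD('n)"
  shows "v = (\<Sum>i<CARD('n). cinner (f i) v *s f i)"
proof (rule ccontr)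
  define w where "w = v - (\<Sum>i<CARD('n). cinner (f i) v *s f i)"
  assume "\<not> ?thesis"
  hence "w \<noteq> 0" by (simp add: w_def)
  moreover have "cinner (f i) w = 0" if "i < CARD('n)" for i
    using orthonormal_on_residual[OF ON that] by (simp add: w_def)
  ultimately obtain u where "cinner u u = 1" "\<forall>i<CARD('n). cinner (f i) u = 0"
    using exists_unit_orthogonal by blast
  hence "orthonormal_on (f(CARD('n) := u)) (Suc CARD('n))"
    using orthonormal_on_extend[OF ON] by blast
  from orthonormal_on_card_le[OF this] show False by simp
qed

lemma linear_le_quadratic_imp_zero:
  fixes a c :: real
  assumes "\<And>t. 2 * t * a \<le> t\<^sup>2 * c"
  shows "a = 0"
proof (rule ccontr)
  assume a: "a \<noteq> 0"
  define d where "d = \<bar>c\<bar> + 1"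
  have d: "d > 0" "\<bar>c\<bar> < d" by (auto simp: d_def)
  define t where "t = a / (2 * d)"
  have "2 * t * a = a\<^sup>2 / d" using d by (simp add: t_def power2_eq_square field_simps)
  moreover have "t\<^sup>2 * c \<le> t\<^sup>2 * \<bar>c\<bar>" by (intro mult_left_mono) auto
  moreover have "t\<^sup>2 * \<bar>c\<bar> = a\<^sup>2 * \<bar>c\<bar> / (4 * d\<^sup>2)"
    using d by (simp add: t_def power2_eq_square field_simps)
  moreover have "a\<^sup>2 * \<bar>c\<bar> / (4 * d\<^sup>2) < a\<^sup>2 / d"
  proof -
    have "a\<^sup>2 * \<bar>c\<bar> < a\<^sup>2 * (4 * d)" using a d by (intro mult_strict_left_mono) auto
    thus ?thesis using d by (simp add: power2_eq_square field_simps)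
  qed
  ultimately show False using assms[of t] by linarith
qed

lemma subspace_rayleigh_le:
  fixes A :: "complex^'n^'n"
  assumes W: "vec.subspace W" "u \<in> W"
    and max: "\<And>v. v \<in> W \<Longrightarrow> norm v = 1 \<Longrightarrow> Re (cinner v (A *v v)) \<le> lam"
  shows "Re (cinner u (A *v u)) \<le> lam * (norm u)\<^sup>2"
proof (cases "u = 0")
  case False
  define r where "r = 1 / norm u"
  have "complex_of_real r *s u = r *\<^sub>R u" by (simp add: vec_eq_iff complex_eq_iff)
  hence "norm (complex_of_real r *s u) = 1" using False by (simp add: r_def)
  hence "Re (cinner (complex_of_real r *s u) (A *v (complex_of_real r *s u))) \<le> lam"
    using max W by (simp add: vec.subspace_scale)
  moreover have "Re (cinner (complex_of_real r *s u) (A *v (complex_of_real r *s u)))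
      = r\<^sup>2 * Re (cinner u (A *v u))"
    by (simp add: vec.scale cinner_scale_left cinner_scale_right power2_eq_square)
  ultimately have "r\<^sup>2 * Re (cinner u (A *v u)) \<le> lam" by simp
  thus ?thesis using False by (simp add: r_def field_simps)
qed simp

text \<open>Variational characterisation: a maximiser of the Rayleigh quotient on an invariant subspace
  is an eigenvector, because the quotient is stationary in every direction orthogonal to it.\<close>

lemma hermitian_maximizer_eigenvector:
  fixes A :: "complex^'n^'n"
  assumes herm: "hermitian A" and W: "vec.subspace W" and AW: "\<And>u. u \<in> W \<Longrightarrow> A *v u \<in> W"
    and w0: "w0 \<in> W" "norm w0 = 1"
    and max: "\<And>u. u \<in> W \<Longrightarrow> norm u = 1 \<Longrightarrow> Re (cinner u (A *v u)) \<le> Re (cinner w0 (A *v w0))"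
  shows "A *v w0 = complex_of_real (Re (cinner w0 (A *v w0))) *s w0"
proof -
  define Q where "Q u = Re (cinner u (A *v u))" for u
  define lam where "lam = Q w0"
  have w0w0: "cinner w0 w0 = 1" using w0(2) by (simp add: cinner_self)
  have bound: "Q u \<le> lam * (norm u)\<^sup>2" if "u \<in> W" for u
    unfolding Q_def lam_def using max by (intro subspace_rayleigh_le[OF W that]) auto
  have re_orth: "Re (cinner u (A *v w0)) = 0" if u: "u \<in> W" "cinner w0 u = 0" for u
  proof (rule linear_le_quadratic_imp_zero)
    fix t :: real
    define v where "v = w0 + complex_of_real t *s u"
    have "v \<in> W" unfolding v_def using W w0 u by (intro vec.subspace_add vec.subspace_scale)
    moreover have "(norm v)\<^sup>2 = 1 + t\<^sup>2 * (norm u)\<^sup>2"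
    proof -
      have "cinner v v = 1 + complex_of_real (t\<^sup>2) * cinner u u"
        unfolding v_def using u(2) w0w0 cinner_eq_0_sym[of w0 u]
        by (simp add: cinner_add_left cinner_add_right cinner_scale_left cinner_scale_right power2_eq_square)
      hence "Re (cinner v v) = 1 + t\<^sup>2 * Re (cinner u u)" by simp
      thus ?thesis by (simp add: cinner_self)
    qed
    moreover have "Q v = lam + 2 * t * Re (cinner u (A *v w0)) + t\<^sup>2 * Q u"
      unfolding v_def Q_def lam_def using hermitian_cinner_swap[OF herm, of w0 u]
      by (simp add: vec.add vec.scale cinner_add_left cinner_add_right cinner_scale_left cinner_scale_right
          power2_eq_square algebra_simps)
    ultimately show "2 * t * Re (cinner u (A *v w0)) \<le> t\<^sup>2 * (lam * (norm u)\<^sup>2 - Q u)"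
      using bound[of v] by (simp add: algebra_simps)
  qed
  have orth: "cinner u (A *v w0) = 0" if u: "u \<in> W" "cinner w0 u = 0" for u
  proof -
    have "Re (cinner (\<i> *s u) (A *v w0)) = 0"
      using u W by (intro re_orth) (auto simp: vec.subspace_scale cinner_scale_right)
    thus ?thesis using re_orth[OF u] by (simp add: cinner_scale_left complex_eq_iff)
  qed
  define z where "z = A *v w0 - complex_of_real lam *s w0"
  have "z \<in> W" unfolding z_def using W w0 AW by (intro vec.subspace_diff vec.subspace_scale) auto
  moreover have "cinner w0 z = 0"
    unfolding z_def using hermitian_cinner_real[OF herm, of w0] w0w0
    by (simp add: cinner_diff_right cinner_scale_right lam_def Q_def)
  ultimately have "cinner z z = 0"
    using orth cinner_eq_0_sym[of w0 z]
    by (subst (2) z_def) (simp add: cinner_diff_right cinner_scale_right)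
  thus ?thesis by (simp add: z_def lam_def Q_def)
qed

lemma hermitian_orthogonal_eigenvector:
  fixes A :: "complex^'n^'n" and f :: "nat \<Rightarrow> complex^'n"
  assumes herm: "hermitian A" and ON: "orthonormal_on f m" and m: "m < CARD('n)"
    and eig: "\<And>i. i < m \<Longrightarrow> \<exists>l. A *v f i = l *s f i"
  shows "\<exists>w. cinner w w = 1 \<and> (\<forall>i<m. cinner (f i) w = 0) \<and>
             A *v w = complex_of_real (Re (cinner w (A *v w))) *s w"
proof -
  define W where "W = {w. \<forall>i<m. cinner (f i) w = 0}"
  have W: "vec.subspace W"
    by (auto simp: vec.subspace_def W_def cinner_add_right cinner_scale_right)
  have AW: "A *v u \<in> W" if "u \<in> W" for u
  proof -
    have "cinner (f i) (A *v u) = 0" if "i < m" for i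
      using eig[OF \<open>i < m\<close>] \<open>u \<in> W\<close> \<open>i < m\<close>
      by (auto simp: hermitian_cinner[OF herm, symmetric] cinner_scale_left W_def)
    thus ?thesis by (simp add: W_def)
  qed
  have cont_cinner: "continuous_on UNIV (\<lambda>w::complex^'n. cinner a w)" for a
    unfolding cinner_def by (intro continuous_intros)
  have "closed W"
  proof -
    have "W = (\<Inter>i<m. {w. cinner (f i) w = 0})" by (auto simp: W_def)
    thus ?thesis using closed_Collect_eq[OF cont_cinner continuous_on_const] by auto
  qed
  hence K: "compact (W \<inter> sphere 0 1)" by auto
  obtain w1 where w1: "cinner w1 w1 = 1" "w1 \<in> W"
    using orthonormal_on_exists_orthogonal_unit[OF ON m] by (auto simp: W_def)
  have "(norm w1)\<^sup>2 = 1" using w1(1) cinner_self[of w1] by (metis of_real_eq_1_iff)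
  hence "W \<inter> sphere 0 1 \<noteq> {}" using w1(2) norm_ge_zero[of w1] by (auto simp: power2_eq_1_iff)
  moreover have "continuous_on (W \<inter> sphere 0 1) (\<lambda>w. Re (cinner w (A *v w)))"
    unfolding cinner_def matrix_vector_mult_def vec_lambda_beta
    by (intro continuous_on_sum continuous_on_mult continuous_on_const continuous_on_component
        continuous_on_id continuous_on_cnj continuous_on_Re)
  ultimately obtain w0 where w0: "w0 \<in> W \<inter> sphere 0 1"
    and max: "\<And>u. u \<in> W \<inter> sphere 0 1 \<Longrightarrow> Re (cinner u (A *v u)) \<le> Re (cinner w0 (A *v w0))"
    using continuous_attains_sup[OF K] by blast
  have "A *v w0 = complex_of_real (Re (cinner w0 (A *v w0))) *s w0"
    using w0 max by (intro hermitian_maximizer_eigenvector[OF herm W AW]) auto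
  thus ?thesis using w0 by (intro exI[of _ w0]) (auto simp: W_def cinner_self)
qed

lemma hermitian_orthonormal_eigenvectors:
  fixes A :: "complex^'n^'n"
  assumes herm: "hermitian A" and "m \<le> CARD('n)"
  shows "\<exists>f lam. orthonormal_on f m \<and> (\<forall>i<m. A *v f i = complex_of_real (lam i) *s f i)"
  using assms(2)
proof (induction m)
  case 0
  thus ?case by (auto simp: orthonormal_on_def)
next
  case (Suc m)
  then obtain f lam where ON: "orthonormal_on f m"
    and ev: "\<forall>i<m. A *v f i = complex_of_real (lam i) *s f i"
    by auto
  obtain w where w: "cinner w w = 1" "\<forall>i<m. cinner (f i) w = 0"
    "A *v w = complex_of_real (Re (cinner w (A *v w))) *s w"
    using hermitian_orthogonal_eigenvector[OF herm ON] Suc.prems ev by fastforce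
  have "orthonormal_on (f(m := w)) (Suc m)" using orthonormal_on_extend[OF ON w(1)] w(2) by blast
  moreover have "\<forall>i<Suc m. A *v (f(m := w)) i
      = complex_of_real ((lam(m := Re (cinner w (A *v w)))) i) *s (f(m := w)) i"
    using ev w(3) by (auto simp: less_Suc_eq)
  ultimately show ?case by blast
qed

definition spectral_mat :: "(nat \<Rightarrow> complex^'n) \<Rightarrow> (nat \<Rightarrow> complex) \<Rightarrow> nat \<Rightarrow> complex^'n^'n" where
  "spectral_mat f s m = (\<chi> r c. \<Sum>i<m. s i * (f i)$r * cnj ((f i)$c))"

lemma spectral_mat_mult_vec: "spectral_mat f s m *v v = (\<Sum>i<m. (s i * cinner (f i) v) *s f i)"
proof -
  have "(spectral_mat f s m *v v)$r = (\<Sum>i<m. (s i * cinner (f i) v) * (f i)$r)" for r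
  proof -
    have "(spectral_mat f s m *v v)$r = (\<Sum>c\<in>UNIV. \<Sum>i<m. s i * (f i)$r * cnj ((f i)$c) * v$c)"
      by (simp add: spectral_mat_def matrix_vector_mult_def sum_distrib_right)
    also have "\<dots> = (\<Sum>i<m. \<Sum>c\<in>UNIV. s i * (f i)$r * cnj ((f i)$c) * v$c)" by (rule sum.swap)
    also have "\<dots> = (\<Sum>i<m. (s i * cinner (f i) v) * (f i)$r)"
      by (simp add: cinner_def sum_distrib_left sum_distrib_right mult_ac)
    finally show ?thesis .
  qed
  thus ?thesis by (simp add: vec_eq_iff sum_component)
qed

lemma spectral_mat_eigenvector:
  assumes "orthonormal_on f m" "j < m"
  shows "spectral_mat f s m *v f j = s j *s f j"
proof -
  have "spectral_mat f s m *v f j = (\<Sum>i<m. (if i = j then s i *s f i else 0))"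
    using assms unfolding spectral_mat_mult_vec orthonormal_on_def by (intro sum.cong) auto
  thus ?thesis using assms(2) by simp
qed

lemma eq_spectral_mat_if_eigenbasis:
  fixes f :: "nat \<Rightarrow> complex^'n" and A :: "complex^'n^'n"
  assumes ON: "orthonormal_on f CARD('n)" and ev: "\<And>i. i < CARD('n) \<Longrightarrow> A *v f i = s i *s f i"
  shows "A = spectral_mat f s CARD('n)"
proof -
  have "A *v v = spectral_mat f s CARD('n) *v v" for v
  proof -
    have "A *v v = A *v (\<Sum>i<CARD('n). cinner (f i) v *s f i)"
      using orthonormal_on_expansion[OF ON, of v] by simp
    also have "\<dots> = (\<Sum>i<CARD('n). (s i * cinner (f i) v) *s f i)"
      by (simp add: vec.sum vec.scale ev mult.commute)
    finally show ?thesis by (simp add: spectral_mat_mult_vec)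
  qed
  thus ?thesis by (simp add: matrix_eq)
qed

lemma pos_def_spectral_mat:
  fixes f :: "nat \<Rightarrow> complex^'n"
  assumes ON: "orthonormal_on f CARD('n)" and pos: "\<And>i. i < CARD('n) \<Longrightarrow> l i > 0"
  shows "pos_def (spectral_mat f (\<lambda>i. complex_of_real (l i)) CARD('n))" (is "pos_def ?B")
proof -
  have "hermitian ?B" by (simp add: hermitian_def spectral_mat_def adjoint_mat_def vec_eq_iff mult_ac)
  moreover have "Re (cinner v (?B *v v)) > 0" if v: "v \<noteq> 0" for v
  proof -
    have "cinner v (?B *v v) = (\<Sum>i<CARD('n). complex_of_real (l i * (cmod (cinner (f i) v))\<^sup>2))"
      by (simp add: spectral_mat_mult_vec cinner_sum_right cinner_scale_right mult.assoc
          cnj_cinner[of v, symmetric] mult_cnj_self mult.commute[of "cnj _"])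
    hence re: "Re (cinner v (?B *v v)) = (\<Sum>i<CARD('n). l i * (cmod (cinner (f i) v))\<^sup>2)"
      by (simp add: Re_sum)
    have "\<exists>i<CARD('n). cinner (f i) v \<noteq> 0"
    proof (rule ccontr)
      assume "\<not> ?thesis"
      hence "v = 0" using orthonormal_on_expansion[OF ON, of v] by simp
      thus False using v by simp
    qed
    then obtain i where i: "i < CARD('n)" "cinner (f i) v \<noteq> 0" by blast
    have "0 < l i * (cmod (cinner (f i) v))\<^sup>2" using pos[OF i(1)] i(2) by simp
    also have "\<dots> \<le> (\<Sum>i<CARD('n). l i * (cmod (cinner (f i) v))\<^sup>2)"
      using i(1) pos by (intro member_le_sum) (auto simp: less_imp_le)
    finally show ?thesis using re by simp
  qed
  ultimately show ?thesis by (simp add: pos_def_def)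
qed

lemma pos_def_plus_scale_kernel:
  assumes "pos_def C" "s \<ge> 0" "C *v y + complex_of_real s *s y = 0"
  shows "y = 0"
proof (rule ccontr)
  assume "y \<noteq> 0"
  hence "Re (cinner y (C *v y)) > 0" using assms(1) by (simp add: pos_def_def)
  moreover have "Re (cinner y (complex_of_real s *s y)) \<ge> 0"
    using assms(2) by (simp add: cinner_scale_right cinner_self)
  moreover have "cinner y (C *v y) + cinner y (complex_of_real s *s y) = 0"
    using assms(3) by (metis cinner_add_right cinner_zero_right)
  ultimately show False by (metis add_pos_nonneg less_irrefl plus_complex.sel(1) zero_complex.sel(1))
qed

text \<open>\<open>(C + \<surd>l) (C - \<surd>l) f = (A - l) f = 0\<close> and \<open>C + \<surd>l\<close> is injective.\<close>

lemma pos_def_sqrt_eigenvector: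
  assumes C: "pos_def C" "C ** C = A" and ev: "A *v f = complex_of_real l *s f" and l: "l > 0"
  shows "C *v f = complex_of_real (sqrt l) *s f"
proof -
  define s where "s = complex_of_real (sqrt l)"
  define y where "y = C *v f - s *s f"
  have "s * s = complex_of_real l" using l by (simp add: s_def flip: of_real_mult)
  hence "C *v y + s *s y = A *v f - complex_of_real l *s f"
    by (simp add: y_def C(2)[symmetric] vec.diff vec.scale matrix_vector_mul_assoc
        vector_ssub_ldistrib vector_smult_assoc)
  hence "y = 0" using ev l pos_def_plus_scale_kernel[OF C(1), of "sqrt l" y] by (simp add: s_def)
  thus ?thesis by (simp add: y_def s_def)
qed

lemma pos_def_sqrt_ex1:
  fixes A :: "complex^'n^'n"
  assumes pd: "pos_def A"
  shows "\<exists>!B. pos_def B \<and> B ** B = A"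
proof -
  obtain f lam where ON: "orthonormal_on f CARD('n)"
    and ev: "\<And>i. i < CARD('n) \<Longrightarrow> A *v f i = complex_of_real (lam i) *s f i"
    using hermitian_orthonormal_eigenvectors[of A "CARD('n)"] pd by (auto simp: pos_def_def)
  have lam: "lam i > 0" if i: "i < CARD('n)" for i
  proof -
    have "cinner (f i) (f i) = 1" using ON i by (simp add: orthonormal_on_def)
    moreover from this have "f i \<noteq> 0" by auto
    hence "Re (cinner (f i) (A *v f i)) > 0" using pd by (simp add: pos_def_def)
    ultimately show ?thesis using ev[OF i] by (simp add: cinner_scale_right)
  qed
  define B where "B = spectral_mat f (\<lambda>i. complex_of_real (sqrt (lam i))) CARD('n)"
  have "pos_def B" unfolding B_def using ON lam by (intro pos_def_spectral_mat) auto
  moreover have "B ** B = A"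
  proof -
    have "(B ** B) *v f i = complex_of_real (lam i) *s f i" if "i < CARD('n)" for i
      using that lam[OF that] ON
      by (simp add: B_def spectral_mat_eigenvector vec.scale flip: matrix_vector_mul_assoc of_real_mult)
    hence "B ** B = spectral_mat f (\<lambda>i. complex_of_real (lam i)) CARD('n)"
      by (rule eq_spectral_mat_if_eigenbasis[OF ON])
    moreover have "A = spectral_mat f (\<lambda>i. complex_of_real (lam i)) CARD('n)"
      by (rule eq_spectral_mat_if_eigenbasis[OF ON ev])
    ultimately show ?thesis by simp
  qed
  moreover have "C = B" if "pos_def C" "C ** C = A" for C
    unfolding B_def using ON pos_def_sqrt_eigenvector[OF that ev lam]
    by (intro eq_spectral_mat_if_eigenbasis) auto
  ultimately show ?thesis by blast
qed

lemma pos_def_sqrt_mat: "pos_def A \<Longrightarrow> pos_def (sqrt_mat A)"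
  and sqrt_mat_mult_self: "pos_def A \<Longrightarrow> sqrt_mat A ** sqrt_mat A = A"
  using theI'[OF pos_def_sqrt_ex1] unfolding sqrt_mat_def by blast+

lemma inv_sqrt_mat_mult_self:
  assumes "pos_def A"
  shows "inv_sqrt_mat A ** inv_sqrt_mat A = matrix_inv A"
proof -
  let ?B = "sqrt_mat A"
  have inv: "invertible ?B" using pos_def_invertible pos_def_sqrt_mat[OF assms] by blast
  have "A ** (inv_sqrt_mat A ** inv_sqrt_mat A) = (?B ** ?B) ** (matrix_inv ?B ** matrix_inv ?B)"
    by (simp only: sqrt_mat_mult_self[OF assms] inv_sqrt_mat_def)
  also have "\<dots> = ?B ** (?B ** matrix_inv ?B) ** matrix_inv ?B"
    by (simp only: matrix_mul_assoc)
  also have "\<dots> = mat 1" by (simp add: matrix_inv_right[OF inv])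
  finally show ?thesis using matrix_inv_eqI by metis
qed

section \<open>Moments of circularly symmetric Gaussian vectors\<close>

lemma borel_measurable_cnj [measurable (raw)]:
  "f \<in> borel_measurable M \<Longrightarrow> (\<lambda>w. cnj (f w)) \<in> borel_measurable M"
  by (rule measurable_compose[OF _ borel_measurable_continuous_onI[OF continuous_on_cnj[OF continuous_on_id]]])

lemma borel_measurable_cinner [measurable (raw)]:
  fixes f g :: "'w \<Rightarrow> complex^'n"
  assumes "f \<in> borel_measurable M" "g \<in> borel_measurable M"
  shows "(\<lambda>w. cinner (f w) (g w)) \<in> borel_measurable M"
proof -
  have cont: "continuous_on UNIV (\<lambda>p::(complex^'n) \<times> (complex^'n). cinner (fst p) (snd p))"
    unfolding cinner_def
    by (intro continuous_on_sum continuous_on_mult continuous_on_cnj continuous_on_fst continuous_on_snd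
        continuous_on_component continuous_on_id)
  have "(\<lambda>w. (f w, g w)) \<in> borel_measurable M" using assms by measurable
  from measurable_compose[OF this borel_measurable_continuous_onI[OF cont]] show ?thesis by simp
qed

lemma real_normal_central_moments:
  fixes m v :: real
  assumes v: "v \<ge> 0"
  shows "integrable (real_normal m v) (\<lambda>x. (x - m) ^ k)"
    and "integral\<^sup>L (real_normal m v) (\<lambda>x. x - m) = 0"
    and "integral\<^sup>L (real_normal m v) (\<lambda>x. (x - m)\<^sup>2) = v"
    and "integral\<^sup>L (real_normal m v) (\<lambda>x. (x - m) ^ 4) = 3 * v\<^sup>2"
proof -
  have "integrable (real_normal m v) (\<lambda>x. (x - m) ^ k) \<and>
    integral\<^sup>L (real_normal m v) (\<lambda>x. x - m) = 0 \<and>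
    integral\<^sup>L (real_normal m v) (\<lambda>x. (x - m)\<^sup>2) = v \<and>
    integral\<^sup>L (real_normal m v) (\<lambda>x. (x - m) ^ 4) = 3 * v\<^sup>2"
  proof (cases "v = 0")
    case True
    have "integrable (return borel m) (\<lambda>x. (x - m) ^ k)"
      unfolding integrable_iff_bounded by (simp add: nn_integral_return)
    thus ?thesis using True by (simp add: real_normal_def integral_return)
  next
    case False
    define s where "s = sqrt v"
    have s: "s > 0" using v False by (simp add: s_def)
    have dens: "real_normal m v = density lborel (normal_density m s)"
      using False by (simp add: real_normal_def s_def)
    have int: "integrable (real_normal m v) (\<lambda>x. (x - m) ^ j)" for j
      unfolding dens by (subst integrable_density) (auto intro: integrable_normal_moment[OF s])
    have I: "integral\<^sup>L (real_normal m v) (\<lambda>x. (x - m) ^ j)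
        = (\<integral>x. normal_density m s x * (x - m) ^ j \<partial>lborel)" for j
      unfolding dens by (subst integral_density) auto
    have "integral\<^sup>L (real_normal m v) (\<lambda>x. x - m) = 0"
      using I[of 1] integral_normal_moment_odd[OF s, of m 0] by simp
    moreover have "integral\<^sup>L (real_normal m v) (\<lambda>x. (x - m)\<^sup>2) = v"
      using I[of 2] integral_normal_moment_even[OF s, of m 1] s v by (simp add: s_def)
    moreover have "integral\<^sup>L (real_normal m v) (\<lambda>x. (x - m) ^ 4) = 3 * v\<^sup>2"
      using I[of 4] integral_normal_moment_even[OF s, of m 2] s v
      by (simp add: s_def fact_numeral power2_eq_square field_simps)
    ultimately show ?thesis using int by blast
  qed
  thus "integrable (real_normal m v) (\<lambda>x. (x - m) ^ k)"
    "integral\<^sup>L (real_normal m v) (\<lambda>x. x - m) = 0"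
    "integral\<^sup>L (real_normal m v) (\<lambda>x. (x - m)\<^sup>2) = v"
    "integral\<^sup>L (real_normal m v) (\<lambda>x. (x - m) ^ 4) = 3 * v\<^sup>2" by auto
qed

lemma real_normal_rv_central_moments:
  fixes Y :: "'w \<Rightarrow> real"
  assumes Y: "Y \<in> borel_measurable M" and d: "distr M borel Y = real_normal m v" and v: "v \<ge> 0"
  shows "integrable M (\<lambda>w. (Y w - m) ^ k)"
    and "integral\<^sup>L M (\<lambda>w. Y w - m) = 0"
    and "integral\<^sup>L M (\<lambda>w. (Y w - m)\<^sup>2) = v"
    and "integral\<^sup>L M (\<lambda>w. (Y w - m) ^ 4) = 3 * v\<^sup>2"
proof -
  have tr: "integral\<^sup>L M (\<lambda>w. g (Y w)) = integral\<^sup>L (real_normal m v) g"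
    if "g \<in> borel_measurable borel" for g :: "real \<Rightarrow> real"
    using integral_distr[OF Y that] d by simp
  show "integrable M (\<lambda>w. (Y w - m) ^ k)"
    using real_normal_central_moments(1)[OF v, of m k] integrable_distr_eq[OF Y, of "\<lambda>x. (x - m) ^ k"] d
    by simp
  show "integral\<^sup>L M (\<lambda>w. Y w - m) = 0"
    using tr[of "\<lambda>x. x - m"] real_normal_central_moments(2)[OF v] by simp
  show "integral\<^sup>L M (\<lambda>w. (Y w - m)\<^sup>2) = v"
    using tr[of "\<lambda>x. (x - m)\<^sup>2"] real_normal_central_moments(3)[OF v] by simp
  show "integral\<^sup>L M (\<lambda>w. (Y w - m) ^ 4) = 3 * v\<^sup>2"
    using tr[of "\<lambda>x. (x - m) ^ 4"] real_normal_central_moments(4)[OF v] by simp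
qed

text \<open>Polarisation of the fourth power: Isserlis' theorem follows from \<open>E[Y\<^sup>4] = 3 E[Y\<^sup>2]\<^sup>2\<close>
  applied to the eight signed sums \<open>Y\<^sub>1 \<plusminus> Y\<^sub>2 \<plusminus> Y\<^sub>3 \<plusminus> Y\<^sub>4\<close>.\<close>

lemma prod4_eq_signed_fourth_powers:
  fixes y1 y2 y3 y4 :: real
  defines "W \<equiv> \<lambda>e2 e3 e4. y1 + e2 * y2 + e3 * y3 + e4 * y4"
  shows "y1 * y2 * y3 * y4 = (W 1 1 1 ^ 4 - W 1 1 (-1) ^ 4 - W 1 (-1) 1 ^ 4 + W 1 (-1) (-1) ^ 4
     - W (-1) 1 1 ^ 4 + W (-1) 1 (-1) ^ 4 + W (-1) (-1) 1 ^ 4 - W (-1) (-1) (-1) ^ 4) / 192"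
  unfolding W_def by (simp add: field_simps) algebra

lemma signed_squares_eq_pairings:
  fixes b11 b12 b13 b14 b22 b23 b24 b33 b34 b44 :: real
  defines "Q \<equiv> \<lambda>e2 e3 e4. b11 + e2 * e2 * b22 + e3 * e3 * b33 + e4 * e4 * b44
    + 2 * e2 * b12 + 2 * e3 * b13 + 2 * e4 * b14 + 2 * e2 * e3 * b23 + 2 * e2 * e4 * b24 + 2 * e3 * e4 * b34"
  shows "(3 * (Q 1 1 1)\<^sup>2 - 3 * (Q 1 1 (-1))\<^sup>2 - 3 * (Q 1 (-1) 1)\<^sup>2 + 3 * (Q 1 (-1) (-1))\<^sup>2
     - 3 * (Q (-1) 1 1)\<^sup>2 + 3 * (Q (-1) 1 (-1))\<^sup>2 + 3 * (Q (-1) (-1) 1)\<^sup>2 - 3 * (Q (-1) (-1) (-1))\<^sup>2) / 192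
     = b12 * b34 + b13 * b24 + b14 * b23"
  unfolding Q_def by (simp add: field_simps) algebra

locale centered_CN =
  fixes M :: "'w measure" and Z :: "'w \<Rightarrow> complex^'n" and S :: "complex^'n^'n"
  assumes CN: "is_CN M Z 0 S" and herm: "hermitian S" and psd: "\<And>a. Re (cinner a (S *v a)) \<ge> 0"
begin

definition re_form :: "complex^'n \<Rightarrow> 'w \<Rightarrow> real" where
  "re_form a w = Re (cinner a (Z w))"

definition real_cov :: "complex^'n \<Rightarrow> complex^'n \<Rightarrow> real" where
  "real_cov a b = Re (cinner a (S *v b)) / 2"

lemma measurable_Z [measurable]: "Z \<in> borel_measurable M"
  using CN by (simp add: is_CN_def)

lemma measurable_re_form [measurable]: "re_form a \<in> borel_measurable M"
  unfolding re_form_def by measurable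

lemma re_form_add: "re_form (a + b) w = re_form a w + re_form b w"
  by (simp add: re_form_def cinner_add_left)

lemma re_form_diff: "re_form (a - b) w = re_form a w - re_form b w"
  by (simp add: re_form_def cinner_diff_left)

lemma re_form_scale: "re_form (complex_of_real e *s a) w = e * re_form a w"
  by (simp add: re_form_def cinner_scale_left)

lemma cinner_eq_re_form: "cinner a (Z w) = complex_of_real (re_form a w) + \<i> * complex_of_real (re_form (\<i> *s a) w)"
  by (simp add: re_form_def cinner_scale_left complex_eq_iff)

lemma real_cov_add_left: "real_cov (a + b) c = real_cov a c + real_cov b c"
  by (simp add: real_cov_def cinner_add_left add_divide_distrib)

lemma real_cov_diff_left: "real_cov (a - b) c = real_cov a c - real_cov b c"
  by (simp add: real_cov_def cinner_diff_left diff_divide_distrib)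

lemma real_cov_scale_left: "real_cov (complex_of_real e *s a) c = e * real_cov a c"
  by (simp add: real_cov_def cinner_scale_left)

lemma real_cov_commute: "real_cov a b = real_cov b a"
  by (simp add: real_cov_def hermitian_cinner_swap[OF herm, of a b])

lemma real_cov_add_right: "real_cov c (a + b) = real_cov c a + real_cov c b"
  and real_cov_diff_right: "real_cov c (a - b) = real_cov c a - real_cov c b"
  and real_cov_scale_right: "real_cov c (complex_of_real e *s a) = e * real_cov c a"
  by (simp_all add: real_cov_commute[of c] real_cov_add_left real_cov_diff_left real_cov_scale_left)

lemma re_form_moments:
  shows "integrable M (\<lambda>w. re_form a w ^ k)"
    and "integral\<^sup>L M (re_form a) = 0"
    and "integral\<^sup>L M (\<lambda>w. (re_form a w)\<^sup>2) = real_cov a a"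
    and "integral\<^sup>L M (\<lambda>w. re_form a w ^ 4) = 3 * (real_cov a a)\<^sup>2"
proof -
  have "distr M borel (re_form a) = real_normal 0 (real_cov a a)"
    using CN unfolding is_CN_def re_form_def real_cov_def by simp
  note moments = real_normal_rv_central_moments[OF measurable_re_form this]
  show "integrable M (\<lambda>w. re_form a w ^ k)" "integral\<^sup>L M (re_form a) = 0"
    "integral\<^sup>L M (\<lambda>w. (re_form a w)\<^sup>2) = real_cov a a"
    "integral\<^sup>L M (\<lambda>w. re_form a w ^ 4) = 3 * (real_cov a a)\<^sup>2"
    using moments psd[of a] by (simp_all add: real_cov_def fun_eq_iff)
qed

lemma has_bochner_integral_re_form_mult:
  "has_bochner_integral M (\<lambda>w. re_form a w * re_form b w) (real_cov a b)"
proof -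
  have pw: "re_form a w * re_form b w = ((re_form (a + b) w)\<^sup>2 - (re_form (a - b) w)\<^sup>2) / 4" for w
    unfolding re_form_add re_form_diff by (simp add: power2_eq_square algebra_simps)
  have "has_bochner_integral M (\<lambda>w. ((re_form (a + b) w)\<^sup>2 - (re_form (a - b) w)\<^sup>2) / 4)
      ((real_cov (a + b) (a + b) - real_cov (a - b) (a - b)) / 4)"
    using re_form_moments(1,3)
    by (intro has_bochner_integral_divide_zero has_bochner_integral_diff) (auto simp: has_bochner_integral_iff)
  moreover have "(real_cov (a + b) (a + b) - real_cov (a - b) (a - b)) / 4 = real_cov a b"
    by (simp add: real_cov_add_left real_cov_add_right real_cov_diff_left real_cov_diff_right
        real_cov_commute[of b a])
  ultimately show ?thesis unfolding pw by simp
qed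

theorem isserlis_re_form:
  "has_bochner_integral M (\<lambda>w. re_form a w * re_form b w * re_form c w * re_form d w)
     (real_cov a b * real_cov c d + real_cov a c * real_cov b d + real_cov a d * real_cov b c)"
proof -
  define v where "v e2 e3 e4 = a + complex_of_real e2 *s b + complex_of_real e3 *s c + complex_of_real e4 *s d"
    for e2 e3 e4
  define W where "W e2 e3 e4 w = re_form (v e2 e3 e4) w" for e2 e3 e4 w
  define Q where "Q e2 e3 e4 = real_cov (v e2 e3 e4) (v e2 e3 e4)" for e2 e3 e4
  have W: "W e2 e3 e4 w = re_form a w + e2 * re_form b w + e3 * re_form c w + e4 * re_form d w"
    for e2 e3 e4 w
    by (simp add: W_def v_def re_form_add re_form_scale)
  have pw: "re_form a w * re_form b w * re_form c w * re_form d w =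
      (W 1 1 1 w ^ 4 - W 1 1 (-1) w ^ 4 - W 1 (-1) 1 w ^ 4 + W 1 (-1) (-1) w ^ 4
     - W (-1) 1 1 w ^ 4 + W (-1) 1 (-1) w ^ 4 + W (-1) (-1) 1 w ^ 4 - W (-1) (-1) (-1) w ^ 4) / 192" for w
    unfolding W by (rule prod4_eq_signed_fourth_powers)
  have fourth: "has_bochner_integral M (\<lambda>w. W e2 e3 e4 w ^ 4) (3 * (Q e2 e3 e4)\<^sup>2)" for e2 e3 e4
    using re_form_moments(1,4) by (simp add: W_def Q_def has_bochner_integral_iff)
  have hb: "has_bochner_integral M (\<lambda>w. re_form a w * re_form b w * re_form c w * re_form d w)
     ((3 * (Q 1 1 1)\<^sup>2 - 3 * (Q 1 1 (-1))\<^sup>2 - 3 * (Q 1 (-1) 1)\<^sup>2 + 3 * (Q 1 (-1) (-1))\<^sup>2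
     - 3 * (Q (-1) 1 1)\<^sup>2 + 3 * (Q (-1) 1 (-1))\<^sup>2 + 3 * (Q (-1) (-1) 1)\<^sup>2 - 3 * (Q (-1) (-1) (-1))\<^sup>2) / 192)"
    unfolding pw by (intro has_bochner_integral_divide_zero has_bochner_integral_add has_bochner_integral_diff fourth)
  have Q: "Q e2 e3 e4 = real_cov a a + e2 * e2 * real_cov b b + e3 * e3 * real_cov c c
      + e4 * e4 * real_cov d d + 2 * e2 * real_cov a b + 2 * e3 * real_cov a c + 2 * e4 * real_cov a d
      + 2 * e2 * e3 * real_cov b c + 2 * e2 * e4 * real_cov b d + 2 * e3 * e4 * real_cov c d" for e2 e3 e4
    by (simp add: Q_def v_def real_cov_add_left real_cov_add_right real_cov_scale_left real_cov_scale_right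
        real_cov_commute[of b a] real_cov_commute[of c a] real_cov_commute[of d a]
        real_cov_commute[of c b] real_cov_commute[of d b] real_cov_commute[of d c] algebra_simps)
  show ?thesis using hb unfolding Q signed_squares_eq_pairings .
qed

lemma has_bochner_integral_cinner: "has_bochner_integral M (\<lambda>w. cinner a (Z w)) 0"
proof -
  have mean: "has_bochner_integral M (re_form v) 0" for v
    using re_form_moments(1)[of v 1] re_form_moments(2)[of v] by (simp add: has_bochner_integral_iff)
  have "has_bochner_integral M (\<lambda>w. complex_of_real (re_form a w) + \<i> * complex_of_real (re_form (\<i> *s a) w))
      (complex_of_real 0 + \<i> * complex_of_real 0)"
    by (intro has_bochner_integral_add has_bochner_integral_mult_right has_bochner_integral_of_real mean)
  thus ?thesis unfolding cinner_eq_re_form by simp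
qed

lemma has_bochner_integral_cinner_mult_cnj:
  "has_bochner_integral M (\<lambda>w. cinner a (Z w) * cnj (cinner b (Z w))) (cinner a (S *v b))"
proof -
  let ?Y = "\<lambda>v w. re_form v w" and ?j = "\<lambda>v. \<i> *s v"
  have pw: "cinner a (Z w) * cnj (cinner b (Z w)) =
      complex_of_real (?Y a w * ?Y b w + ?Y (?j a) w * ?Y (?j b) w)
      + \<i> * complex_of_real (?Y (?j a) w * ?Y b w - ?Y a w * ?Y (?j b) w)" for w
    unfolding cinner_eq_re_form by (simp add: complex_eq_iff algebra_simps)
  have "has_bochner_integral M (\<lambda>w. cinner a (Z w) * cnj (cinner b (Z w)))
      (complex_of_real (real_cov a b + real_cov (?j a) (?j b)) + \<i> * complex_of_real (real_cov (?j a) b - real_cov a (?j b)))"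
    unfolding pw
    by (intro has_bochner_integral_add has_bochner_integral_diff has_bochner_integral_mult_right
        has_bochner_integral_of_real has_bochner_integral_re_form_mult)
  moreover have "complex_of_real (real_cov a b + real_cov (?j a) (?j b))
      + \<i> * complex_of_real (real_cov (?j a) b - real_cov a (?j b)) = cinner a (S *v b)"
    by (simp add: real_cov_def vec.scale cinner_scale_left cinner_scale_right complex_eq_iff)
  ultimately show ?thesis by simp
qed

text \<open>The fourth moment of a circular Gaussian has only two pairings: the third one,
  \<open>E[cnj A cnj D] E[B C]\<close>, vanishes by circular symmetry.\<close>

theorem isserlis_cinner:
  "has_bochner_integral M (\<lambda>w. cnj (cinner a (Z w)) * cinner b (Z w) * cinner c (Z w) * cnj (cinner d (Z w)))
     (cinner b (S *v a) * cinner c (S *v d) + cinner c (S *v a) * cinner b (S *v d))"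
proof -
  let ?Y = "\<lambda>v w. re_form v w" and ?j = "\<lambda>v. \<i> *s v"
  define P where "P w = ?Y a w * ?Y b w + ?Y (?j a) w * ?Y (?j b) w" for w
  define Q where "Q w = ?Y a w * ?Y (?j b) w - ?Y (?j a) w * ?Y b w" for w
  define R where "R w = ?Y c w * ?Y d w + ?Y (?j c) w * ?Y (?j d) w" for w
  define T where "T w = ?Y (?j c) w * ?Y d w - ?Y c w * ?Y (?j d) w" for w
  have pw: "cnj (cinner a (Z w)) * cinner b (Z w) * cinner c (Z w) * cnj (cinner d (Z w))
      = complex_of_real (P w * R w - Q w * T w) + \<i> * complex_of_real (P w * T w + Q w * R w)" for w
    unfolding P_def Q_def R_def T_def cinner_eq_re_form by (simp add: complex_eq_iff algebra_simps)
  note int4 = integrable.intros[OF isserlis_re_form]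
    and E4 = has_bochner_integral_integral_eq[OF isserlis_re_form]
  have int: "integrable M (\<lambda>w. P w * R w - Q w * T w)" "integrable M (\<lambda>w. P w * T w + Q w * R w)"
    unfolding P_def Q_def R_def T_def by (simp_all add: ring_distribs mult.assoc[symmetric] int4)
  have re: "(\<integral>w. P w * R w - Q w * T w \<partial>M)
      = Re (cinner b (S *v a) * cinner c (S *v d) + cinner c (S *v a) * cinner b (S *v d))"
    unfolding P_def Q_def R_def T_def
    by (simp add: ring_distribs mult.assoc[symmetric] int4 E4)
      (simp add: real_cov_def vec.scale cinner_scale_left cinner_scale_right
        hermitian_cinner_swap[OF herm, of b a] hermitian_cinner_swap[OF herm, of c a] algebra_simps)
  have im: "(\<integral>w. P w * T w + Q w * R w \<partial>M)
      = Im (cinner b (S *v a) * cinner c (S *v d) + cinner c (S *v a) * cinner b (S *v d))"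
    unfolding P_def Q_def R_def T_def
    by (simp add: ring_distribs mult.assoc[symmetric] int4 E4)
      (simp add: real_cov_def vec.scale cinner_scale_left cinner_scale_right
        hermitian_cinner_swap[OF herm, of b a] hermitian_cinner_swap[OF herm, of c a] algebra_simps)
  have "has_bochner_integral M (\<lambda>w. complex_of_real (P w * R w - Q w * T w) + \<i> * complex_of_real (P w * T w + Q w * R w))
      (complex_of_real (\<integral>w. P w * R w - Q w * T w \<partial>M) + \<i> * complex_of_real (\<integral>w. P w * T w + Q w * R w \<partial>M))"
    by (intro has_bochner_integral_add has_bochner_integral_mult_right has_bochner_integral_of_real
        has_bochner_integral_integrable int)
  then show ?thesis unfolding pw re im complex_eq[symmetric] .
qed

end

lemma is_CN1_proj_moments:
  fixes z :: "'w \<Rightarrow> complex"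
  assumes CN: "is_CN1 M z m v" and v: "v \<ge> 0"
  shows "has_bochner_integral M (\<lambda>w. Re (cnj a * z w) - Re (cnj a * m)) 0"
    and "has_bochner_integral M (\<lambda>w. (Re (cnj a * z w) - Re (cnj a * m))\<^sup>2) ((cmod a)\<^sup>2 * v / 2)"
proof -
  have [measurable]: "z \<in> borel_measurable M" using CN by (simp add: is_CN1_def)
  have meas: "(\<lambda>w. Re (cnj a * z w)) \<in> borel_measurable M" by measurable
  have distr: "distr M borel (\<lambda>w. Re (cnj a * z w)) = real_normal (Re (cnj a * m)) ((cmod a)\<^sup>2 * v / 2)"
    using CN by (simp add: is_CN1_def)
  have "(cmod a)\<^sup>2 * v / 2 \<ge> 0" using v by simp
  note R = real_normal_rv_central_moments[OF meas distr this]
  show "has_bochner_integral M (\<lambda>w. Re (cnj a * z w) - Re (cnj a * m)) 0"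
    "has_bochner_integral M (\<lambda>w. (Re (cnj a * z w) - Re (cnj a * m))\<^sup>2) ((cmod a)\<^sup>2 * v / 2)"
    using R(1)[of 1] R(1)[of 2] R(2,3) by (simp_all add: has_bochner_integral_iff)
qed

lemma is_CN1_moments:
  fixes z :: "'w \<Rightarrow> complex"
  assumes P: "prob_space M" and CN: "is_CN1 M z m v" and v: "v \<ge> 0"
  shows "has_bochner_integral M z m"
    and "has_bochner_integral M (\<lambda>w. z w * cnj (z w)) (complex_of_real ((cmod m)\<^sup>2 + v))"
proof -
  interpret prob_space M by (rule P)
  have re1: "has_bochner_integral M (\<lambda>w. Re (z w) - Re m) 0"
    and re2: "has_bochner_integral M (\<lambda>w. (Re (z w) - Re m)\<^sup>2) (v / 2)"
    using is_CN1_proj_moments[OF CN v, of 1] by simp_all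
  have im1: "has_bochner_integral M (\<lambda>w. Im (z w) - Im m) 0"
    and im2: "has_bochner_integral M (\<lambda>w. (Im (z w) - Im m)\<^sup>2) (v / 2)"
    using is_CN1_proj_moments[OF CN v, of \<i>] by simp_all
  have const: "has_bochner_integral M (\<lambda>w. c) c" for c :: "'c::{banach, second_countable_topology}"
    by (simp add: has_bochner_integral_iff prob_space)
  have "has_bochner_integral M (\<lambda>w. complex_of_real (Re (z w) - Re m) + \<i> * complex_of_real (Im (z w) - Im m) + m)
     (complex_of_real 0 + \<i> * complex_of_real 0 + m)"
    by (intro has_bochner_integral_add has_bochner_integral_mult_right has_bochner_integral_of_real re1 im1 const)
  moreover have "complex_of_real (Re (z w) - Re m) + \<i> * complex_of_real (Im (z w) - Im m) + m = z w" for w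
    by (simp add: complex_eq_iff)
  ultimately show "has_bochner_integral M z m" by simp
  have pw: "z w * cnj (z w) = complex_of_real ((Re (z w) - Re m)\<^sup>2 + (2 * Re m) * (Re (z w) - Re m) + (Re m)\<^sup>2
     + ((Im (z w) - Im m)\<^sup>2 + (2 * Im m) * (Im (z w) - Im m) + (Im m)\<^sup>2))" for w
    by (simp add: complex_eq_iff power2_eq_square algebra_simps)
  have "has_bochner_integral M (\<lambda>w. (Re (z w) - Re m)\<^sup>2 + (2 * Re m) * (Re (z w) - Re m) + (Re m)\<^sup>2
     + ((Im (z w) - Im m)\<^sup>2 + (2 * Im m) * (Im (z w) - Im m) + (Im m)\<^sup>2))
     (v / 2 + (2 * Re m) * 0 + (Re m)\<^sup>2 + (v / 2 + (2 * Im m) * 0 + (Im m)\<^sup>2))"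
    by (intro has_bochner_integral_add has_bochner_integral_mult_right re1 re2 im1 im2 const)
  thus "has_bochner_integral M (\<lambda>w. z w * cnj (z w)) (complex_of_real ((cmod m)\<^sup>2 + v))"
    unfolding pw by (intro has_bochner_integral_of_real) (simp add: cmod_power2 add.commute)
qed

section \<open>Independence and square integrability\<close>

lemma Int_stable_gen_events: "Int_stable (gen_events M X)"
  unfolding Int_stable_def gen_events_def
proof clarify
  fix A B :: "'b set" assume "A \<in> sets borel" "B \<in> sets borel"
  thus "\<exists>C. (X -` A \<inter> space M) \<inter> (X -` B \<inter> space M) = X -` C \<inter> space M \<and> C \<in> sets borel"
    by (intro exI[of _ "A \<inter> B"]) auto
qed

lemma gen_events_subset_Pow: "gen_events M X \<subseteq> Pow (space M)"
  unfolding gen_events_def by auto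

lemma measurable_sigma_gen_events:
  fixes X :: "'w \<Rightarrow> 'b::topological_space"
  assumes "gen_events M X \<subseteq> E" "E \<subseteq> Pow (space M)"
  shows "X \<in> measurable (sigma (space M) E) borel"
proof (rule measurableI)
  fix A :: "'b set" assume "A \<in> sets borel"
  hence "X -` A \<inter> space M \<in> E" using assms(1) unfolding gen_events_def by auto
  thus "X -` A \<inter> space (sigma (space M) E) \<in> sets (sigma (space M) E)"
    using assms(2) by (simp add: sets_measure_of)
qed simp

lemma (in prob_space) indep_set_mono:
  assumes "indep_set A B" "A' \<subseteq> A" "B' \<subseteq> B"
  shows "indep_set A' B'"
proof (rule indep_setI)
  show "A' \<subseteq> events" "B' \<subseteq> events"
    using assms indep_setD_ev1[OF assms(1)] indep_setD_ev2[OF assms(1)] by auto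
  show "prob (a \<inter> b) = prob a * prob b" if "a \<in> A'" "b \<in> B'" for a b
    using assms that by (auto intro: indep_setD)
qed

lemma (in prob_space) indep_set_sigma_split:
  assumes ind: "indep_sets F I" and k: "k \<in> I" and st: "\<And>j. j \<in> I \<Longrightarrow> Int_stable (F j)"
  shows "indep_set (sigma_sets (space M) (F k)) (sigma_sets (space M) (\<Union>j\<in>I - {k}. F j))"
proof -
  define J where "J b = (if b then {k} else I - {k})" for b
  have J: "(\<Union>b. J b) = I" "\<And>b. J b \<subseteq> I" using k by (auto simp: J_def)
  have "indep_sets (\<lambda>b. sigma_sets (space M) (\<Union>i\<in>J b. F i)) UNIV"
  proof (rule indep_sets_collect_sigma)
    show "indep_sets F (\<Union>b. J b)" using ind J(1) by simp
    show "Int_stable (F i)" if "i \<in> J b" for i b using st J(2) that by blast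
    show "disjoint_family_on J UNIV" by (auto simp: J_def disjoint_family_on_def)
  qed
  moreover have "(\<lambda>b. sigma_sets (space M) (\<Union>i\<in>J b. F i))
      = case_bool (sigma_sets (space M) (F k)) (sigma_sets (space M) (\<Union>j\<in>I - {k}. F j))"
    by (auto simp: fun_eq_iff J_def split: bool.split)
  ultimately show ?thesis by (simp add: indep_set_def)
qed

lemma indep_sets_integral_mult:
  fixes F :: "'i \<Rightarrow> 'w set set" and G H :: "'w \<Rightarrow> complex"
  assumes P: "prob_space M" and ind: "prob_space.indep_sets M F I" and k: "k \<in> I"
    and st: "\<And>j. j \<in> I \<Longrightarrow> Int_stable (F j)"
    and G: "G \<in> borel_measurable (sigma (space M) (F k))"
    and H: "H \<in> borel_measurable (sigma (space M) (\<Union>j\<in>I - {k}. F j))"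
    and int: "integrable M G" "integrable M H"
  shows "integrable M (\<lambda>w. G w * H w)"
    and "(\<integral>w. G w * H w \<partial>M) = (\<integral>w. G w \<partial>M) * (\<integral>w. H w \<partial>M)"
proof -
  interpret prob_space M by (rule P)
  define Sk where "Sk = sigma_sets (space M) (F k)"
  define Srest where "Srest = sigma_sets (space M) (\<Union>j\<in>I - {k}. F j)"
  have indep: "indep_set Sk Srest" unfolding Sk_def Srest_def by (rule indep_set_sigma_split[OF ind k st])
  have F_Pow: "F j \<subseteq> Pow (space M)" if "j \<in> I" for j
    using ind that unfolding indep_sets_def using sets.sets_into_space by blast
  have G_Sk: "G -` A \<inter> space M \<in> Sk" if "A \<in> sets borel" for A
    using measurable_sets[OF G that] F_Pow[OF k] by (simp add: Sk_def sets_measure_of)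
  have H_Srest: "H -` A \<inter> space M \<in> Srest" if "A \<in> sets borel" for A
  proof -
    have "(\<Union>j\<in>I - {k}. F j) \<subseteq> Pow (space M)" using F_Pow by blast
    thus ?thesis using measurable_sets[OF H that] by (simp add: Srest_def sets_measure_of)
  qed
  have "indep_set (sigma_sets (space M) {G -` A \<inter> space M |A. A \<in> sets borel})
      (sigma_sets (space M) {H -` A \<inter> space M |A. A \<in> sets borel})"
    by (rule indep_set_mono[OF indep]) (use G_Sk H_Srest in \<open>auto intro!: sigma_sets_mono simp: Sk_def Srest_def\<close>)
  hence "indep_var borel G borel H"
    unfolding indep_var_eq using int by (simp add: borel_measurable_integrable)
  thus "integrable M (\<lambda>w. G w * H w)" "(\<integral>w. G w * H w \<partial>M) = (\<integral>w. G w \<partial>M) * (\<integral>w. H w \<partial>M)"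
    using indep_var_integrable indep_var_lebesgue_integral int by blast+
qed

context prob_space
begin

definition square_integrable :: "('a \<Rightarrow> complex) \<Rightarrow> bool" where
  "square_integrable f \<longleftrightarrow> f \<in> borel_measurable M \<and> integrable M (\<lambda>w. f w * cnj (f w))"

lemma square_integrable_mult_integrable:
  assumes "square_integrable f" "square_integrable g"
  shows "integrable M (\<lambda>w. f w * g w)"
proof (rule Bochner_Integration.integrable_bound[of _ "\<lambda>w. f w * cnj (f w) + g w * cnj (g w)"])
  show "integrable M (\<lambda>w. f w * cnj (f w) + g w * cnj (g w))"
    using assms by (simp add: square_integrable_def)
  have [measurable]: "f \<in> borel_measurable M" "g \<in> borel_measurable M"
    using assms by (simp_all add: square_integrable_def)
  show "(\<lambda>w. f w * g w) \<in> borel_measurable M" by measurable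
  show "AE w in M. norm (f w * g w) \<le> norm (f w * cnj (f w) + g w * cnj (g w))"
  proof (rule AE_I2)
    fix w
    have "2 * cmod (f w) * cmod (g w) \<le> (cmod (f w))\<^sup>2 + (cmod (g w))\<^sup>2" by (rule sum_squares_bound)
    hence "cmod (f w) * cmod (g w) \<le> (cmod (f w))\<^sup>2 + (cmod (g w))\<^sup>2"
      using mult_nonneg_nonneg[OF norm_ge_zero norm_ge_zero, of "f w" "g w"] by linarith
    moreover have "f w * cnj (f w) + g w * cnj (g w) = complex_of_real ((cmod (f w))\<^sup>2 + (cmod (g w))\<^sup>2)"
      by (simp add: mult_cnj_self)
    ultimately show "norm (f w * g w) \<le> norm (f w * cnj (f w) + g w * cnj (g w))"
      by (simp only: norm_mult norm_of_real)
  qed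
qed

lemma square_integrable_cnj:
  assumes "square_integrable f"
  shows "square_integrable (\<lambda>w. cnj (f w))"
proof -
  have [measurable]: "f \<in> borel_measurable M" using assms by (simp add: square_integrable_def)
  have "(\<lambda>w. cnj (f w)) \<in> borel_measurable M" by measurable
  thus ?thesis using assms by (simp add: square_integrable_def mult.commute)
qed

lemma square_integrable_integrable: "square_integrable f \<Longrightarrow> integrable M f"
  using square_integrable_mult_integrable[of f "\<lambda>_. 1"] by (simp add: square_integrable_def)

lemma square_integrable_add:
  assumes "square_integrable f" "square_integrable g"
  shows "square_integrable (\<lambda>w. f w + g w)"
proof -
  have "(\<lambda>w. (f w + g w) * cnj (f w + g w))
      = (\<lambda>w. f w * cnj (f w) + g w * cnj (g w) + f w * cnj (g w) + g w * cnj (f w))"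
    by (simp add: fun_eq_iff algebra_simps)
  moreover note square_integrable_mult_integrable[OF assms(1) square_integrable_cnj[OF assms(2)]]
    square_integrable_mult_integrable[OF assms(2) square_integrable_cnj[OF assms(1)]]
  moreover have [measurable]: "f \<in> borel_measurable M" "g \<in> borel_measurable M"
    using assms by (simp_all add: square_integrable_def)
  moreover have "(\<lambda>w. f w + g w) \<in> borel_measurable M" by measurable
  ultimately show ?thesis using assms by (simp add: square_integrable_def)
qed

lemma square_integrable_zero: "square_integrable (\<lambda>w. 0)"
  by (simp add: square_integrable_def)

lemma square_integrable_sum:
  "finite S \<Longrightarrow> (\<And>k. k \<in> S \<Longrightarrow> square_integrable (f k)) \<Longrightarrow> square_integrable (\<lambda>w. \<Sum>k\<in>S. f k w)"
  by (induction S rule: finite_induct) (simp_all add: square_integrable_zero square_integrable_add)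


lemma square_integrable_cinner:
  assumes "centered_CN M Z S"
  shows "square_integrable (\<lambda>w. cinner p (Z w))"
  using centered_CN.has_bochner_integral_cinner_mult_cnj[OF assms, of p p] centered_CN.measurable_Z[OF assms]
  by (simp add: square_integrable_def integrable.intros)

end

lemma cvar_centered:
  assumes "has_bochner_integral M X 0"
  shows "complex_of_real (cvar M X) = (\<integral>w. X w * cnj (X w) \<partial>M)"
proof -
  have "complex_of_real (cvar M X) = complex_of_real (\<integral>w. (cmod (X w))\<^sup>2 \<partial>M)"
    unfolding cvar_def has_bochner_integral_integral_eq[OF assms] by simp
  also have "\<dots> = (\<integral>w. complex_of_real ((cmod (X w))\<^sup>2) \<partial>M)"
    by (rule integral_complex_of_real[symmetric])
  finally show ?thesis by (simp only: mult_cnj_self)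
qed

lemma ccov_centered:
  assumes "has_bochner_integral M X 0" "has_bochner_integral M Y 0"
  shows "ccov M X Y = (\<integral>w. X w * cnj (Y w) \<partial>M)"
proof -
  have "(\<integral>u. X u \<partial>M) = 0" "(\<integral>u. Y u \<partial>M) = 0"
    using assms by (simp_all add: has_bochner_integral_integral_eq)
  thus ?thesis unfolding ccov_def by simp
qed

section \<open>The detector statistic\<close>

definition conj_row :: "complex^'n^'m \<Rightarrow> 'm \<Rightarrow> complex^'n" where
  "conj_row P k = (\<chi> j. cnj (P$k$j))"

lemma matrix_vector_mult_nth_cinner: "(P *v y) $ k = cinner (conj_row P k) y"
  by (simp add: conj_row_def cinner_def matrix_vector_mult_def)

lemma cinner_matrix_vector_mult:
  "cinner (P *v u) (R *v v) = (\<Sum>k\<in>UNIV. cnj (cinner (conj_row P k) u) * cinner (conj_row R k) v)"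
  by (simp add: cinner_def[of "P *v u"] matrix_vector_mult_nth_cinner)

lemma cinner_conj_row: "cinner (conj_row P k) (S *v conj_row R l) = (P ** S ** adjoint_mat R) $ k $ l"
proof -
  have "cinner (conj_row P k) (S *v conj_row R l) = (\<Sum>j\<in>UNIV. \<Sum>m\<in>UNIV. P$k$j * S$j$m * cnj (R$l$m))"
    by (simp add: conj_row_def cinner_def matrix_vector_mult_def sum_distrib_left mult_ac)
  also have "\<dots> = (P ** S ** adjoint_mat R) $ k $ l"
    by (simp add: matrix_matrix_mult_def adjoint_mat_def sum_distrib_right sum_distrib_left mult_ac)
      (rule sum.swap)
  finally show ?thesis .
qed

lemma sum_nth_mult_eq_trace: "(\<Sum>k\<in>UNIV. \<Sum>k'\<in>UNIV. (X::complex^'n^'n) $ k' $ k * Y $ k $ k') = trace (X ** Y)"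
  by (simp add: trace_def matrix_matrix_mult_def) (rule sum.swap)

text \<open>\<open>wls_mat U S = C U\<^sup>H S\<^sup>-\<^sup>1\<close> is the weighted least-squares estimator of the coordinates in the
  subspace spanned by \<open>U\<close>; the statistic only sees the data through these estimators.\<close>

definition wls_mat :: "complex^'d^'n \<Rightarrow> complex^'n^'n \<Rightarrow> complex^'n^'d" where
  "wls_mat U S = T_mat U S ** inv_sqrt_mat S"

lemma
  fixes U :: "complex^'d^'n" and S :: "complex^'n^'n"
  assumes pd: "pos_def S" and fcr: "full_column_rank U"
  shows wls_mat_left_inverse: "wls_mat U S ** U = mat 1"
    and wls_mat_covariance: "wls_mat U S ** S ** adjoint_mat (wls_mat U S) = C_mat U S"
proof -
  define G where "G = adjoint_mat U ** matrix_inv S ** U"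
  have "pos_def G" unfolding G_def by (rule pos_def_congruence[OF pos_def_matrix_inv[OF pd] fcr])
  hence G: "invertible G" "hermitian G" by (simp_all add: pos_def_invertible pos_def_def)
  have CG: "C_mat U S ** G = mat 1" using matrix_inv_left[OF G(1)] by (simp add: C_mat_def G_def)
  have hC: "hermitian (C_mat U S)" unfolding C_mat_def G_def[symmetric] by (rule hermitian_matrix_inv[OF G(2,1)])
  have hSi: "hermitian (matrix_inv S)" using pos_def_matrix_inv[OF pd] by (simp add: pos_def_def)
  have P: "wls_mat U S = C_mat U S ** (adjoint_mat U ** matrix_inv S)"
    by (simp add: wls_mat_def T_mat_def matrix_mul_assoc inv_sqrt_mat_mult_self[OF pd, symmetric])
  show "wls_mat U S ** U = mat 1"
    unfolding P using CG by (simp add: G_def matrix_mul_assoc)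
  have "adjoint_mat (wls_mat U S) = matrix_inv S ** U ** C_mat U S"
    unfolding P using hC hSi by (simp add: adjoint_mat_mult hermitian_def matrix_mul_assoc)
  hence "wls_mat U S ** S ** adjoint_mat (wls_mat U S)
      = C_mat U S ** adjoint_mat U ** (matrix_inv S ** S) ** matrix_inv S ** U ** C_mat U S"
    by (simp add: P matrix_mul_assoc)
  also have "\<dots> = C_mat U S ** G ** C_mat U S"
    by (simp add: matrix_inv_left[OF pos_def_invertible[OF pd]] G_def matrix_mul_assoc)
  finally show "wls_mat U S ** S ** adjoint_mat (wls_mat U S) = C_mat U S" using CG by simp
qed

lemma (in prob_space) second_moment_cross_form:
  fixes u v :: "'a \<Rightarrow> complex^'n" and A B :: "'a measure" and P R :: "complex^'n^'d"
  assumes u: "centered_CN M u Su" and v: "centered_CN M v Sv"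
    and [measurable]: "u \<in> borel_measurable A" "v \<in> borel_measurable B"
    and indep: "\<And>G H :: 'a \<Rightarrow> complex. G \<in> borel_measurable A \<Longrightarrow> H \<in> borel_measurable B \<Longrightarrow>
       integrable M G \<Longrightarrow> integrable M H \<Longrightarrow>
       has_bochner_integral M (\<lambda>w. G w * H w) ((\<integral>w. G w \<partial>M) * (\<integral>w. H w \<partial>M))"
  defines "T \<equiv> \<lambda>w. \<Sum>k\<in>UNIV. cnj (cinner (conj_row P k) (u w)) * cinner (conj_row R k) (v w)"
  shows "has_bochner_integral M (\<lambda>w. T w * cnj (T w))
           (trace ((P ** Su ** adjoint_mat P) ** (R ** Sv ** adjoint_mat R)))"
proof -
  define U where "U k k' w = cnj (cinner (conj_row P k) (u w)) * cinner (conj_row P k') (u w)" for k k' w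
  define V where "V k k' w = cinner (conj_row R k) (v w) * cnj (cinner (conj_row R k') (v w))" for k k' w
  have pw: "T w * cnj (T w) = (\<Sum>k\<in>UNIV. \<Sum>k'\<in>UNIV. U k k' w * V k k' w)" for w
    by (simp add: T_def U_def V_def sum_distrib_left sum_distrib_right mult_ac)
  have EU: "has_bochner_integral M (U k k') ((P ** Su ** adjoint_mat P) $ k' $ k)" for k k'
    using centered_CN.has_bochner_integral_cinner_mult_cnj[OF u, of "conj_row P k'" "conj_row P k"]
    by (simp add: U_def[abs_def] cinner_conj_row mult.commute)
  have EV: "has_bochner_integral M (V k k') ((R ** Sv ** adjoint_mat R) $ k $ k')" for k k'
    using centered_CN.has_bochner_integral_cinner_mult_cnj[OF v, of "conj_row R k" "conj_row R k'"]
    by (simp add: V_def[abs_def] cinner_conj_row)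
  have "has_bochner_integral M (\<lambda>w. U k k' w * V k k' w)
      ((P ** Su ** adjoint_mat P) $ k' $ k * (R ** Sv ** adjoint_mat R) $ k $ k')" for k k'
  proof -
    have "U k k' \<in> borel_measurable A" "V k k' \<in> borel_measurable B"
      unfolding U_def[abs_def] V_def[abs_def] by measurable
    from indep[OF this integrable.intros[OF EU] integrable.intros[OF EV]]
    show ?thesis
      by (simp add: has_bochner_integral_integral_eq[OF EU] has_bochner_integral_integral_eq[OF EV])
  qed
  hence "has_bochner_integral M (\<lambda>w. \<Sum>k\<in>UNIV. \<Sum>k'\<in>UNIV. U k k' w * V k k' w)
      (\<Sum>k\<in>UNIV. \<Sum>k'\<in>UNIV. (P ** Su ** adjoint_mat P) $ k' $ k * (R ** Sv ** adjoint_mat R) $ k $ k')"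
    by (intro has_bochner_integral_sum)
  thus ?thesis unfolding pw sum_nth_mult_eq_trace .
qed

locale detector_model =
  fixes M :: "'w measure" and L :: nat
    and U :: "complex^'d^'n" and Sth :: "complex^'d^'d"
    and Sr Ss :: "complex^'n^'n"
    and va vb :: real and mub :: complex
    and x :: "'w \<Rightarrow> complex^'n"
    and al be :: "nat \<Rightarrow> 'w \<Rightarrow> complex"
    and dr ds :: "nat \<Rightarrow> 'w \<Rightarrow> complex^'n"
  assumes prob: "prob_space M"
    and fcr: "full_column_rank U"
    and hSth: "hermitian Sth" and psdSth: "pos_semidef Sth"
    and pdr: "pos_def Sr" and pds: "pos_def Ss"
    and va: "va \<ge> 0" and vb: "vb \<ge> 0"
    and CN_x: "is_CN M x 0 (U ** Sth ** adjoint_mat U)"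
    and CN_al: "\<And>i. i < L \<Longrightarrow> is_CN1 M (al i) 0 va"
    and CN_be: "\<And>i. i < L \<Longrightarrow> is_CN1 M (be i) mub vb"
    and CN_dr: "\<And>i. i < L \<Longrightarrow> is_CN M (dr i) 0 Sr"
    and CN_ds: "\<And>i. i < L \<Longrightarrow> is_CN M (ds i) 0 Ss"
    and indep: "model_indep M L x al be dr ds"
begin

sublocale prob_space M by (rule prob)

definition "Kx = U ** Sth ** adjoint_mat U"
definition "Pr = wls_mat U Sr"
definition "Ps = wls_mat U Ss"
definition "MU = M_U U Sr Ss"
definition "Q = MU ** Ps"
definition "Cr = C_mat U Sr"
definition "Cs = C_mat U Ss"

lemma centered_CN_x: "centered_CN M x Kx"
proof
  show "is_CN M x 0 Kx" using CN_x by (simp add: Kx_def)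
  show "hermitian Kx" using hSth by (simp add: Kx_def hermitian_def adjoint_mat_mult matrix_mul_assoc)
  show "Re (cinner a (Kx *v a)) \<ge> 0" for a
  proof -
    have "cinner a (Kx *v a) = cinner (adjoint_mat U *v a) (Sth *v (adjoint_mat U *v a))"
      by (simp add: Kx_def matrix_vector_mul_assoc[symmetric] cinner_adjoint_right)
    thus ?thesis using psdSth by (simp add: pos_semidef_def)
  qed
qed

lemma centered_CN_dr: "i < L \<Longrightarrow> centered_CN M (dr i) Sr"
  using CN_dr pdr pos_def_cinner_nonneg[OF pdr] by unfold_locales (auto simp: pos_def_def)

lemma centered_CN_ds: "i < L \<Longrightarrow> centered_CN M (ds i) Ss"
  using CN_ds pds pos_def_cinner_nonneg[OF pds] by unfold_locales (auto simp: pos_def_def)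

lemma Pr_Sr_Pr: "Pr ** Sr ** adjoint_mat Pr = Cr"
  unfolding Pr_def Cr_def by (rule wls_mat_covariance[OF pdr fcr])

lemma Kx_congruence: "A ** U = mat 1 \<Longrightarrow> B ** U = mat 1 \<Longrightarrow> A ** Kx ** adjoint_mat B = Sth"
  by (metis Kx_def adjoint_mat_mult adjoint_mat_one matrix_mul_assoc matrix_mul_lid matrix_mul_rid)

lemma Pr_Kx_Pr: "Pr ** Kx ** adjoint_mat Pr = Sth"
  and Q_Kx_Pr: "Q ** Kx ** adjoint_mat Pr = MU ** Sth"
  and Pr_Kx_Q: "Pr ** Kx ** adjoint_mat Q = Sth ** adjoint_mat MU"
  and Q_Kx_Q: "Q ** Kx ** adjoint_mat Q = MU ** Sth ** adjoint_mat MU"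
  and Q_Ss_Q: "Q ** Ss ** adjoint_mat Q = MU ** Cs ** adjoint_mat MU"
proof -
  have PrU: "Pr ** U = mat 1" and PsU: "Ps ** U = mat 1"
    unfolding Pr_def Ps_def by (rule wls_mat_left_inverse[OF pdr fcr], rule wls_mat_left_inverse[OF pds fcr])
  show "Pr ** Kx ** adjoint_mat Pr = Sth" by (rule Kx_congruence[OF PrU PrU])
  show "Q ** Kx ** adjoint_mat Pr = MU ** Sth"
    using Kx_congruence[OF PsU PrU] by (simp add: Q_def matrix_mul_assoc[symmetric])
  show "Pr ** Kx ** adjoint_mat Q = Sth ** adjoint_mat MU"
    using Kx_congruence[OF PrU PsU] by (simp add: Q_def adjoint_mat_mult matrix_mul_assoc)
  have Q_cong: "Q ** S ** adjoint_mat Q = MU ** (Ps ** S ** adjoint_mat Ps) ** adjoint_mat MU" for S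
    by (simp add: Q_def adjoint_mat_mult matrix_mul_assoc)
  show "Q ** Kx ** adjoint_mat Q = MU ** Sth ** adjoint_mat MU"
    unfolding Q_cong Kx_congruence[OF PsU PsU] ..
  show "Q ** Ss ** adjoint_mat Q = MU ** Cs ** adjoint_mat MU"
    unfolding Q_cong Ps_def Cs_def wls_mat_covariance[OF pds fcr] ..
qed

definition events_of :: "rv_idx \<Rightarrow> 'w set set" where
  "events_of k = (case k of IX \<Rightarrow> gen_events M x | IAlpha i \<Rightarrow> gen_events M (al i)
     | IBeta i \<Rightarrow> gen_events M (be i) | IDr i \<Rightarrow> gen_events M (dr i) | IDs i \<Rightarrow> gen_events M (ds i))"

definition model_vars :: "rv_idx set" where
  "model_vars = {IX} \<union> IAlpha ` {..<L} \<union> IBeta ` {..<L} \<union> IDr ` {..<L} \<union> IDs ` {..<L}"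

definition "sigma_var k = sigma (space M) (events_of k)"
definition "sigma_rest k = sigma (space M) (\<Union>j\<in>model_vars - {k}. events_of j)"

lemma model_vars_iff [simp]:
  "IX \<in> model_vars" "IAlpha i \<in> model_vars \<longleftrightarrow> i < L" "IBeta i \<in> model_vars \<longleftrightarrow> i < L"
  "IDr i \<in> model_vars \<longleftrightarrow> i < L" "IDs i \<in> model_vars \<longleftrightarrow> i < L"
  by (auto simp: model_vars_def)

lemma events_of_subset_Pow: "events_of k \<subseteq> Pow (space M)"
  by (cases k) (simp_all add: events_of_def gen_events_subset_Pow)

lemma has_bochner_integral_indep_mult:
  fixes G H :: "'w \<Rightarrow> complex"
  assumes "k \<in> model_vars" "G \<in> borel_measurable (sigma_var k)" "H \<in> borel_measurable (sigma_rest k)"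
    "integrable M G" "integrable M H"
  shows "has_bochner_integral M (\<lambda>w. G w * H w) ((\<integral>w. G w \<partial>M) * (\<integral>w. H w \<partial>M))"
proof -
  have "indep_sets events_of model_vars"
    using indep unfolding model_indep_def events_of_def model_vars_def .
  moreover have "Int_stable (events_of j)" for j
    by (cases j) (simp_all add: events_of_def Int_stable_gen_events)
  ultimately show ?thesis
    using indep_sets_integral_mult[OF prob _ assms(1) _ assms(2,3)[unfolded sigma_var_def sigma_rest_def] assms(4,5)]
    by (simp add: has_bochner_integral_iff)
qed

lemma has_bochner_integral_indep_mult':
  fixes G H :: "'w \<Rightarrow> complex"
  assumes "k \<in> model_vars" "G \<in> borel_measurable (sigma_rest k)" "H \<in> borel_measurable (sigma_var k)"
    "integrable M G" "integrable M H"
  shows "has_bochner_integral M (\<lambda>w. G w * H w) ((\<integral>w. G w \<partial>M) * (\<integral>w. H w \<partial>M))"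
  using has_bochner_integral_indep_mult[OF assms(1,3,2,5,4)] by (simp add: mult.commute)

lemma has_bochner_integral_indep_mult_zero:
  fixes G H :: "'w \<Rightarrow> complex"
  assumes "k \<in> model_vars" "G \<in> borel_measurable (sigma_var k)" "H \<in> borel_measurable (sigma_rest k)"
    "has_bochner_integral M G 0" "integrable M H"
  shows "has_bochner_integral M (\<lambda>w. G w * H w) 0"
  using has_bochner_integral_indep_mult[OF assms(1-3) integrable.intros[OF assms(4)] assms(5)]
    has_bochner_integral_integral_eq[OF assms(4)]
  by simp

lemma measurable_sigma_rest:
  assumes "j \<in> model_vars" "j \<noteq> k" "gen_events M X = events_of j"
  shows "X \<in> borel_measurable (sigma_rest k)"
  unfolding sigma_rest_def using assms events_of_subset_Pow
  by (intro measurable_sigma_gen_events) auto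

lemma measurable_sigma_var: "gen_events M X = events_of k \<Longrightarrow> X \<in> borel_measurable (sigma_var k)"
  unfolding sigma_var_def using events_of_subset_Pow by (intro measurable_sigma_gen_events) auto

lemma x_measurable_rest: "k \<noteq> IX \<Longrightarrow> x \<in> borel_measurable (sigma_rest k)"
  and al_measurable_rest: "i < L \<Longrightarrow> k \<noteq> IAlpha i \<Longrightarrow> al i \<in> borel_measurable (sigma_rest k)"
  and be_measurable_rest: "i < L \<Longrightarrow> k \<noteq> IBeta i \<Longrightarrow> be i \<in> borel_measurable (sigma_rest k)"
  and dr_measurable_rest: "i < L \<Longrightarrow> k \<noteq> IDr i \<Longrightarrow> dr i \<in> borel_measurable (sigma_rest k)"
  and ds_measurable_rest: "i < L \<Longrightarrow> k \<noteq> IDs i \<Longrightarrow> ds i \<in> borel_measurable (sigma_rest k)"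
  by (auto intro!: measurable_sigma_rest simp: events_of_def)

lemma al_measurable_var: "al i \<in> borel_measurable (sigma_var (IAlpha i))"
  and be_measurable_var: "be i \<in> borel_measurable (sigma_var (IBeta i))"
  and dr_measurable_var: "dr i \<in> borel_measurable (sigma_var (IDr i))"
  and ds_measurable_var: "ds i \<in> borel_measurable (sigma_var (IDs i))"
  by (auto intro!: measurable_sigma_var simp: events_of_def)

lemma x_measurable: "x \<in> borel_measurable M"
  using centered_CN.measurable_Z[OF centered_CN_x] .

text \<open>\<open>px k\<close>, \<open>qx k\<close>, \<open>pdr i k\<close>, \<open>qds i k\<close> and \<open>pr i k\<close> are the \<open>k\<close>-th coordinates of \<open>P\<^sub>r x\<close>, \<open>Q x\<close>,
  \<open>P\<^sub>r \<delta>\<^sub>r\<^sub>,\<^sub>i\<close>, \<open>Q \<delta>\<^sub>s\<^sub>,\<^sub>i\<close> and \<open>P\<^sub>r r\<^sub>i\<close>.\<close>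

definition "px k w = cinner (conj_row Pr k) (x w)"
definition "qx k w = cinner (conj_row Q k) (x w)"
definition "pdr i k w = cinner (conj_row Pr k) (dr i w)"
definition "qds i k w = cinner (conj_row Q k) (ds i w)"
definition "pr i k w = be i w * px k w + pdr i k w"

definition "Txx w = (\<Sum>k\<in>UNIV. cnj (px k w) * qx k w)"
definition "Txs i w = (\<Sum>k\<in>UNIV. cnj (px k w) * qds i k w)"
definition "Trx i w = (\<Sum>k\<in>UNIV. cnj (pdr i k w) * qx k w)"
definition "Trs i w = (\<Sum>k\<in>UNIV. cnj (pdr i k w) * qds i k w)"

definition "echo i w = cnj (be i w) * Txx w + Trx i w"
definition "null_stat i w = cnj (be i w) * Txs i w + Trs i w"
definition "stat h i w = (if h then al i w * echo i w else 0) + null_stat i w"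

lemma null_stat_eq: "null_stat i w = (\<Sum>k\<in>UNIV. cnj (pr i k w) * qds i k w)"
  by (simp add: null_stat_def Txs_def Trs_def pr_def sum_distrib_left sum.distrib algebra_simps)

lemma c_stat_eq_stat: "c_stat U Sr Ss (meas_r x be dr i w) (meas_s h x al ds i w) = stat h i w"
proof -
  have key: "c_stat U Sr Ss (meas_r x be dr i w) (a *s x w + ds i w) = a * echo i w + null_stat i w" for a
  proof -
    have "c_stat U Sr Ss (meas_r x be dr i w) (a *s x w + ds i w)
        = cinner (Pr *v (be i w *s x w + dr i w)) (Q *v (a *s x w + ds i w))"
      by (simp add: c_stat_def meas_r_def Pr_def wls_mat_def Q_def MU_def Ps_def matrix_vector_mul_assoc)
    also have "\<dots> = (\<Sum>k\<in>UNIV. cnj (pr i k w) * (a * qx k w + qds i k w))"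
      by (subst cinner_matrix_vector_mult)
        (simp add: cinner_add_right cinner_scale_right pr_def px_def pdr_def qx_def qds_def)
    also have "\<dots> = a * echo i w + null_stat i w"
      by (simp add: null_stat_eq echo_def Txx_def Trx_def pr_def sum_distrib_left sum.distrib algebra_simps)
    finally show ?thesis .
  qed
  have s: "meas_s h x al ds i w = (if h then al i w else 0) *s x w + ds i w"
    by (simp add: meas_s_def)
  show ?thesis unfolding s key by (simp add: stat_def)
qed

lemma measurable_px [measurable]:
  assumes [measurable]: "x \<in> borel_measurable N"
  shows "px k \<in> borel_measurable N"
  unfolding px_def[abs_def] by measurable

lemma measurable_qx [measurable]:
  assumes [measurable]: "x \<in> borel_measurable N"
  shows "qx k \<in> borel_measurable N"
  unfolding qx_def[abs_def] by measurable

lemma measurable_pdr [measurable]: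
  assumes [measurable]: "dr i \<in> borel_measurable N"
  shows "pdr i k \<in> borel_measurable N"
  unfolding pdr_def[abs_def] by measurable

lemma measurable_qds [measurable]:
  assumes [measurable]: "ds i \<in> borel_measurable N"
  shows "qds i k \<in> borel_measurable N"
  unfolding qds_def[abs_def] by measurable

lemma measurable_pr [measurable]:
  assumes [measurable]: "x \<in> borel_measurable N" "be i \<in> borel_measurable N" "dr i \<in> borel_measurable N"
  shows "pr i k \<in> borel_measurable N"
  unfolding pr_def[abs_def] by measurable

lemma measurable_Txx [measurable]:
  assumes [measurable]: "x \<in> borel_measurable N"
  shows "Txx \<in> borel_measurable N"
  unfolding Txx_def[abs_def] by measurable

lemma measurable_Txs [measurable]:
  assumes [measurable]: "x \<in> borel_measurable N" "ds i \<in> borel_measurable N"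
  shows "Txs i \<in> borel_measurable N"
  unfolding Txs_def[abs_def] by measurable

lemma measurable_Trx [measurable]:
  assumes [measurable]: "x \<in> borel_measurable N" "dr i \<in> borel_measurable N"
  shows "Trx i \<in> borel_measurable N"
  unfolding Trx_def[abs_def] by measurable

lemma measurable_Trs [measurable]:
  assumes [measurable]: "dr i \<in> borel_measurable N" "ds i \<in> borel_measurable N"
  shows "Trs i \<in> borel_measurable N"
  unfolding Trs_def[abs_def] by measurable

lemma measurable_echo [measurable]:
  assumes [measurable]: "x \<in> borel_measurable N" "be i \<in> borel_measurable N" "dr i \<in> borel_measurable N"
  shows "echo i \<in> borel_measurable N"
  unfolding echo_def[abs_def] by measurable

lemma measurable_null_stat [measurable]:
  assumes [measurable]: "x \<in> borel_measurable N" "be i \<in> borel_measurable N"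
    "dr i \<in> borel_measurable N" "ds i \<in> borel_measurable N"
  shows "null_stat i \<in> borel_measurable N"
  unfolding null_stat_def[abs_def] by measurable

lemma measurable_stat [measurable]:
  assumes [measurable]: "x \<in> borel_measurable N" "al i \<in> borel_measurable N"
    "be i \<in> borel_measurable N" "dr i \<in> borel_measurable N" "ds i \<in> borel_measurable N"
  shows "stat h i \<in> borel_measurable N"
  unfolding stat_def[abs_def] by (cases h) simp_all

lemma scalar_moments:
  assumes i: "i < L"
  shows al_mean: "has_bochner_integral M (al i) 0"
    and al_second_moment: "has_bochner_integral M (\<lambda>w. al i w * cnj (al i w)) (complex_of_real va)"
    and be_second_moment:
      "has_bochner_integral M (\<lambda>w. be i w * cnj (be i w)) (complex_of_real ((cmod mub)\<^sup>2 + vb))"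
    and square_integrable_al: "square_integrable (al i)"
    and square_integrable_be: "square_integrable (be i)"
proof -
  have "al i \<in> borel_measurable M" "be i \<in> borel_measurable M"
    using CN_al[OF i] CN_be[OF i] by (simp_all add: is_CN1_def)
  thus "has_bochner_integral M (al i) 0"
    "has_bochner_integral M (\<lambda>w. al i w * cnj (al i w)) (complex_of_real va)"
    "has_bochner_integral M (\<lambda>w. be i w * cnj (be i w)) (complex_of_real ((cmod mub)\<^sup>2 + vb))"
    "square_integrable (al i)" "square_integrable (be i)"
    using is_CN1_moments[OF prob CN_al[OF i] va] is_CN1_moments[OF prob CN_be[OF i] vb]
    by (auto simp: square_integrable_def intro: integrable.intros)
qed

lemma pdr_mean: "i < L \<Longrightarrow> has_bochner_integral M (pdr i k) 0"
  unfolding pdr_def[abs_def] by (rule centered_CN.has_bochner_integral_cinner[OF centered_CN_dr])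

lemma qds_mean: "i < L \<Longrightarrow> has_bochner_integral M (qds i k) 0"
  unfolding qds_def[abs_def] by (rule centered_CN.has_bochner_integral_cinner[OF centered_CN_ds])

lemma square_integrable_indep_mult:
  fixes G H :: "'w \<Rightarrow> complex"
  assumes k: "k \<in> model_vars" and G: "G \<in> borel_measurable (sigma_var k)" "square_integrable G"
    and H: "H \<in> borel_measurable (sigma_rest k)" "square_integrable H"
  shows "square_integrable (\<lambda>w. G w * H w)"
proof -
  have "has_bochner_integral M (\<lambda>w. (G w * cnj (G w)) * (H w * cnj (H w)))
      ((\<integral>w. G w * cnj (G w) \<partial>M) * (\<integral>w. H w * cnj (H w) \<partial>M))"
    using G H by (intro has_bochner_integral_indep_mult[OF k]) (simp_all add: square_integrable_def)
  moreover have [measurable]: "G \<in> borel_measurable M" "H \<in> borel_measurable M"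
    using G(2) H(2) by (simp_all add: square_integrable_def)
  moreover have "(\<lambda>w. G w * H w) \<in> borel_measurable M" by measurable
  ultimately show ?thesis by (auto simp: square_integrable_def mult_ac intro: integrable.intros)
qed

lemma square_integrable_px: "square_integrable (px k)"
  and square_integrable_qx: "square_integrable (qx k)"
  unfolding px_def[abs_def] qx_def[abs_def] by (rule square_integrable_cinner[OF centered_CN_x])+

lemma square_integrable_pdr: "i < L \<Longrightarrow> square_integrable (pdr i k)"
  and square_integrable_qds: "i < L \<Longrightarrow> square_integrable (qds i k)"
  unfolding pdr_def[abs_def] qds_def[abs_def]
  by (rule square_integrable_cinner[OF centered_CN_dr], assumption,
      rule square_integrable_cinner[OF centered_CN_ds], assumption)

lemma square_integrable_Txx: "square_integrable Txx"
  unfolding Txx_def[abs_def]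
proof (rule square_integrable_sum)
  fix k
  have [measurable]: "x \<in> borel_measurable M" by (rule x_measurable)
  have "integrable M (\<lambda>w. cnj (px k w) * qx k w * px k w * cnj (qx k w))"
    unfolding px_def qx_def
    using centered_CN.isserlis_cinner[OF centered_CN_x] by (rule integrable.intros)
  moreover have "(\<lambda>w. cnj (px k w) * qx k w) \<in> borel_measurable M" by measurable
  ultimately show "square_integrable (\<lambda>w. cnj (px k w) * qx k w)"
    by (simp add: square_integrable_def mult_ac)
qed simp

lemma square_integrable_Txs:
  assumes i: "i < L"
  shows "square_integrable (Txs i)"
  unfolding Txs_def[abs_def]
proof (rule square_integrable_sum)
  fix k
  have [measurable]: "x \<in> borel_measurable (sigma_rest (IDs i))" "ds i \<in> borel_measurable (sigma_var (IDs i))"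
    by (rule x_measurable_rest, simp, rule ds_measurable_var)
  have "square_integrable (\<lambda>w. qds i k w * cnj (px k w))"
    by (rule square_integrable_indep_mult[of "IDs i"])
      (simp add: i, measurable, rule square_integrable_qds[OF i], measurable,
       rule square_integrable_cnj[OF square_integrable_px])
  thus "square_integrable (\<lambda>w. cnj (px k w) * qds i k w)" by (simp add: mult.commute)
qed simp

lemma square_integrable_Trx:
  assumes i: "i < L"
  shows "square_integrable (Trx i)"
  unfolding Trx_def[abs_def]
proof (rule square_integrable_sum)
  fix k
  have [measurable]: "x \<in> borel_measurable (sigma_rest (IDr i))" "dr i \<in> borel_measurable (sigma_var (IDr i))"
    by (rule x_measurable_rest, simp, rule dr_measurable_var)
  show "square_integrable (\<lambda>w. cnj (pdr i k w) * qx k w)"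
    by (rule square_integrable_indep_mult[of "IDr i"])
      (simp add: i, measurable, rule square_integrable_cnj[OF square_integrable_pdr[OF i]], measurable,
       rule square_integrable_qx)
qed simp

lemma square_integrable_Trs:
  assumes i: "i < L"
  shows "square_integrable (Trs i)"
  unfolding Trs_def[abs_def]
proof (rule square_integrable_sum)
  fix k
  have [measurable]: "dr i \<in> borel_measurable (sigma_rest (IDs i))" "ds i \<in> borel_measurable (sigma_var (IDs i))"
    by (rule dr_measurable_rest[OF i], simp, rule ds_measurable_var)
  have "square_integrable (\<lambda>w. qds i k w * cnj (pdr i k w))"
    by (rule square_integrable_indep_mult[of "IDs i"])
      (simp add: i, measurable, rule square_integrable_qds[OF i], measurable,
       rule square_integrable_cnj[OF square_integrable_pdr[OF i]])
  thus "square_integrable (\<lambda>w. cnj (pdr i k w) * qds i k w)" by (simp add: mult.commute)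
qed simp

lemma square_integrable_beta_mult:
  assumes i: "i < L" and A: "A \<in> borel_measurable (sigma_rest (IBeta i))" "square_integrable A"
  shows "square_integrable (\<lambda>w. cnj (be i w) * A w)"
proof (rule square_integrable_indep_mult[of "IBeta i", OF _ _ _ A])
  have [measurable]: "be i \<in> borel_measurable (sigma_var (IBeta i))" by (rule be_measurable_var)
  show "(\<lambda>w. cnj (be i w)) \<in> borel_measurable (sigma_var (IBeta i))" by measurable
qed (simp_all add: i square_integrable_cnj[OF square_integrable_be[OF i]])

lemma square_integrable_pr:
  assumes i: "i < L"
  shows "square_integrable (pr i k)"
  unfolding pr_def[abs_def]
proof (rule square_integrable_add)
  have [measurable]: "x \<in> borel_measurable (sigma_rest (IBeta i))" by (rule x_measurable_rest) simp
  have "square_integrable (\<lambda>w. cnj (be i w) * cnj (px k w))"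
    by (rule square_integrable_beta_mult[OF i]) (measurable, rule square_integrable_cnj[OF square_integrable_px])
  thus "square_integrable (\<lambda>w. be i w * px k w)"
    using square_integrable_cnj by fastforce
qed (rule square_integrable_pdr[OF i])

lemma square_integrable_echo:
  assumes i: "i < L"
  shows "square_integrable (echo i)"
  unfolding echo_def[abs_def]
proof (rule square_integrable_add)
  have [measurable]: "x \<in> borel_measurable (sigma_rest (IBeta i))" by (rule x_measurable_rest) simp
  show "square_integrable (\<lambda>w. cnj (be i w) * Txx w)"
    by (rule square_integrable_beta_mult[OF i]) (measurable, rule square_integrable_Txx)
qed (rule square_integrable_Trx[OF i])

lemma square_integrable_null_stat:
  assumes i: "i < L"
  shows "square_integrable (null_stat i)"
  unfolding null_stat_def[abs_def]
proof (rule square_integrable_add)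
  have [measurable]: "x \<in> borel_measurable (sigma_rest (IBeta i))" "ds i \<in> borel_measurable (sigma_rest (IBeta i))"
    by (rule x_measurable_rest, simp, rule ds_measurable_rest[OF i], simp)
  show "square_integrable (\<lambda>w. cnj (be i w) * Txs i w)"
    by (rule square_integrable_beta_mult[OF i]) (measurable, rule square_integrable_Txs[OF i])
qed (rule square_integrable_Trs[OF i])

lemma square_integrable_stat:
  assumes i: "i < L"
  shows "square_integrable (stat h i)"
  unfolding stat_def[abs_def]
proof (rule square_integrable_add)
  have [measurable]: "x \<in> borel_measurable (sigma_rest (IAlpha i))" "be i \<in> borel_measurable (sigma_rest (IAlpha i))"
    "dr i \<in> borel_measurable (sigma_rest (IAlpha i))" "al i \<in> borel_measurable (sigma_var (IAlpha i))"
    by (rule x_measurable_rest, simp, rule be_measurable_rest[OF i], simp, rule dr_measurable_rest[OF i], simp,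
        rule al_measurable_var)
  have "square_integrable (\<lambda>w. al i w * echo i w)"
    by (rule square_integrable_indep_mult[of "IAlpha i"])
      (simp add: i, measurable, rule square_integrable_al[OF i], measurable, rule square_integrable_echo[OF i])
  thus "square_integrable (\<lambda>w. if h then al i w * echo i w else 0)"
    by (cases h) (simp_all add: square_integrable_zero)
qed (rule square_integrable_null_stat[OF i])

lemma Txs_second_moment:
  assumes i: "i < L"
  shows "has_bochner_integral M (\<lambda>w. Txs i w * cnj (Txs i w)) (trace (MU ** Cs ** adjoint_mat MU ** Sth))"
proof -
  have "has_bochner_integral M (\<lambda>w. Txs i w * cnj (Txs i w))
      (trace ((Pr ** Kx ** adjoint_mat Pr) ** (Q ** Ss ** adjoint_mat Q)))"
    unfolding Txs_def[abs_def] px_def qds_def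
    by (rule second_moment_cross_form[OF centered_CN_x centered_CN_ds[OF i] x_measurable_rest ds_measurable_var
          has_bochner_integral_indep_mult'[of "IDs i"]]) (simp_all add: i)
  thus ?thesis unfolding Pr_Kx_Pr Q_Ss_Q trace_mul_sym[of Sth] .
qed

lemma Trx_second_moment:
  assumes i: "i < L"
  shows "has_bochner_integral M (\<lambda>w. Trx i w * cnj (Trx i w)) (trace (adjoint_mat MU ** Cr ** MU ** Sth))"
proof -
  have "has_bochner_integral M (\<lambda>w. Trx i w * cnj (Trx i w))
      (trace ((Pr ** Sr ** adjoint_mat Pr) ** (Q ** Kx ** adjoint_mat Q)))"
    unfolding Trx_def[abs_def] pdr_def qx_def
    by (rule second_moment_cross_form[OF centered_CN_dr[OF i] centered_CN_x dr_measurable_var x_measurable_rest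
          has_bochner_integral_indep_mult[of "IDr i"]]) (simp_all add: i)
  moreover have "trace (Cr ** (MU ** Sth ** adjoint_mat MU)) = trace (adjoint_mat MU ** Cr ** MU ** Sth)"
    using trace_mul_sym[of "Cr ** MU ** Sth" "adjoint_mat MU"] by (simp add: matrix_mul_assoc)
  ultimately show ?thesis unfolding Pr_Sr_Pr Q_Kx_Q by simp
qed

lemma Trs_second_moment:
  assumes i: "i < L"
  shows "has_bochner_integral M (\<lambda>w. Trs i w * cnj (Trs i w)) (trace (MU ** Cs ** adjoint_mat MU ** Cr))"
proof -
  have "has_bochner_integral M (\<lambda>w. Trs i w * cnj (Trs i w))
      (trace ((Pr ** Sr ** adjoint_mat Pr) ** (Q ** Ss ** adjoint_mat Q)))"
    unfolding Trs_def[abs_def] pdr_def qds_def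
    by (rule second_moment_cross_form[OF centered_CN_dr[OF i] centered_CN_ds[OF i] dr_measurable_rest
          ds_measurable_var has_bochner_integral_indep_mult'[of "IDs i"]]) (simp_all add: i)
  thus ?thesis unfolding Pr_Sr_Pr Q_Ss_Q trace_mul_sym[of Cr] .
qed

text \<open>Besides the trace term, Isserlis' theorem contributes \<open>|E T\<^sub>x\<^sub>x|\<^sup>2 = |tr(M\<^sub>U \<Sigma>\<^sub>\<theta>)|\<^sup>2\<close>.\<close>

lemma Txx_second_moment:
  "has_bochner_integral M (\<lambda>w. Txx w * cnj (Txx w))
     (trace (MU ** Sth ** adjoint_mat MU ** Sth) + complex_of_real ((cmod (trace (MU ** Sth)))\<^sup>2))"
proof -
  have pw: "Txx w * cnj (Txx w) = (\<Sum>k\<in>UNIV. \<Sum>k'\<in>UNIV.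
      cnj (cinner (conj_row Pr k) (x w)) * cinner (conj_row Q k) (x w)
      * cinner (conj_row Pr k') (x w) * cnj (cinner (conj_row Q k') (x w)))" for w
    by (simp add: Txx_def px_def qx_def sum_distrib_left sum_distrib_right mult_ac)
  have "has_bochner_integral M (\<lambda>w. Txx w * cnj (Txx w))
      (\<Sum>k\<in>UNIV. \<Sum>k'\<in>UNIV. cinner (conj_row Q k) (Kx *v conj_row Pr k) * cinner (conj_row Pr k') (Kx *v conj_row Q k')
        + cinner (conj_row Pr k') (Kx *v conj_row Pr k) * cinner (conj_row Q k) (Kx *v conj_row Q k'))"
    unfolding pw by (intro has_bochner_integral_sum centered_CN.isserlis_cinner[OF centered_CN_x])
  also have "(\<Sum>k\<in>UNIV. \<Sum>k'\<in>UNIV. cinner (conj_row Q k) (Kx *v conj_row Pr k) * cinner (conj_row Pr k') (Kx *v conj_row Q k')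
        + cinner (conj_row Pr k') (Kx *v conj_row Pr k) * cinner (conj_row Q k) (Kx *v conj_row Q k'))
      = (\<Sum>k\<in>UNIV. \<Sum>k'\<in>UNIV. (MU ** Sth) $ k $ k * (Sth ** adjoint_mat MU) $ k' $ k'
        + Sth $ k' $ k * (MU ** Sth ** adjoint_mat MU) $ k $ k')"
    by (simp add: cinner_conj_row Pr_Kx_Pr Q_Kx_Pr Pr_Kx_Q Q_Kx_Q)
  also have "(\<Sum>k\<in>UNIV. \<Sum>k'\<in>UNIV. (MU ** Sth) $ k $ k * (Sth ** adjoint_mat MU) $ k' $ k'
        + Sth $ k' $ k * (MU ** Sth ** adjoint_mat MU) $ k $ k')
      = trace (MU ** Sth) * trace (Sth ** adjoint_mat MU) + trace (Sth ** (MU ** Sth ** adjoint_mat MU))"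
    by (simp add: sum.distrib sum_nth_mult_eq_trace trace_def sum_product)
  also have "trace (Sth ** adjoint_mat MU) = cnj (trace (MU ** Sth))"
  proof -
    have "Sth ** adjoint_mat MU = adjoint_mat (MU ** Sth)"
      using hSth by (simp add: adjoint_mat_mult hermitian_def)
    thus ?thesis by (simp add: trace_adjoint_mat)
  qed
  also have "trace (Sth ** (MU ** Sth ** adjoint_mat MU)) = trace (MU ** Sth ** adjoint_mat MU ** Sth)"
    by (rule trace_mul_sym)
  finally show ?thesis by (simp add: mult_cnj_self add.commute)
qed

lemma pdr_cross_term:
  fixes G :: "'w \<Rightarrow> complex" and B :: "'d \<Rightarrow> 'w \<Rightarrow> complex"
  assumes i: "i < L" and G: "G \<in> borel_measurable (sigma_rest (IDr i))" "square_integrable G"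
    and B: "\<And>k. B k \<in> borel_measurable (sigma_rest (IDr i))" "\<And>k. square_integrable (B k)"
  shows "has_bochner_integral M (\<lambda>w. G w * cnj (\<Sum>k\<in>UNIV. cnj (pdr i k w) * B k w)) 0"
proof -
  have trm: "has_bochner_integral M (\<lambda>w. pdr i k w * (G w * cnj (B k w))) 0" for k
  proof (rule has_bochner_integral_indep_mult_zero[of "IDr i"])
    have [measurable]: "dr i \<in> borel_measurable (sigma_var (IDr i))" "G \<in> borel_measurable (sigma_rest (IDr i))"
      "B k \<in> borel_measurable (sigma_rest (IDr i))"
      by (rule dr_measurable_var, rule G(1), rule B(1))
    show "pdr i k \<in> borel_measurable (sigma_var (IDr i))" by measurable
    show "(\<lambda>w. G w * cnj (B k w)) \<in> borel_measurable (sigma_rest (IDr i))" by measurable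
    show "integrable M (\<lambda>w. G w * cnj (B k w))"
      by (rule square_integrable_mult_integrable[OF G(2) square_integrable_cnj[OF B(2)]])
  qed (simp_all add: i pdr_mean)
  have "has_bochner_integral M (\<lambda>w. \<Sum>k\<in>UNIV. pdr i k w * (G w * cnj (B k w))) (\<Sum>k\<in>(UNIV::'d set). 0)"
    by (intro has_bochner_integral_sum trm)
  thus ?thesis by (simp add: sum_distrib_left mult_ac)
qed

text \<open>\<open>\<beta>\<^sub>i\<close> and \<open>\<delta>\<^sub>r\<^sub>,\<^sub>i\<close> enter the forms below as independent factors, one of them centred, so only
  the two diagonal terms survive.\<close>

lemma second_moment_beta_form:
  fixes A T :: "'w \<Rightarrow> complex" and B :: "'d \<Rightarrow> 'w \<Rightarrow> complex"
  assumes i: "i < L"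
    and A: "A \<in> borel_measurable (sigma_rest (IBeta i))" "A \<in> borel_measurable (sigma_rest (IDr i))"
      "square_integrable A"
    and B: "\<And>k. B k \<in> borel_measurable (sigma_rest (IDr i))" "\<And>k. square_integrable (B k)"
    and T: "\<And>w. T w = (\<Sum>k\<in>UNIV. cnj (pdr i k w) * B k w)"
    and EA: "has_bochner_integral M (\<lambda>w. A w * cnj (A w)) eA"
    and ET: "has_bochner_integral M (\<lambda>w. T w * cnj (T w)) eT"
  shows "has_bochner_integral M (\<lambda>w. (cnj (be i w) * A w + T w) * cnj (cnj (be i w) * A w + T w))
           (complex_of_real ((cmod mub)\<^sup>2 + vb) * eA + eT)"
proof -
  have sqA': "square_integrable (\<lambda>w. cnj (be i w) * A w)"
    by (rule square_integrable_beta_mult[OF i A(1,3)])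
  have pw: "(cnj (be i w) * A w + T w) * cnj (cnj (be i w) * A w + T w)
      = (be i w * cnj (be i w)) * (A w * cnj (A w)) + cnj (be i w) * A w * cnj (T w)
        + T w * cnj (cnj (be i w) * A w) + T w * cnj (T w)" for w
    by (simp add: algebra_simps)
  have "has_bochner_integral M (\<lambda>w. (be i w * cnj (be i w)) * (A w * cnj (A w)))
      ((\<integral>w. be i w * cnj (be i w) \<partial>M) * (\<integral>w. A w * cnj (A w) \<partial>M))"
  proof (rule has_bochner_integral_indep_mult[of "IBeta i"])
    have [measurable]: "be i \<in> borel_measurable (sigma_var (IBeta i))" "A \<in> borel_measurable (sigma_rest (IBeta i))"
      by (rule be_measurable_var, rule A(1))
    show "(\<lambda>w. be i w * cnj (be i w)) \<in> borel_measurable (sigma_var (IBeta i))" by measurable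
    show "(\<lambda>w. A w * cnj (A w)) \<in> borel_measurable (sigma_rest (IBeta i))" by measurable
  qed (use i integrable.intros[OF be_second_moment[OF i]] integrable.intros[OF EA] in simp_all)
  hence t1: "has_bochner_integral M (\<lambda>w. (be i w * cnj (be i w)) * (A w * cnj (A w)))
      (complex_of_real ((cmod mub)\<^sup>2 + vb) * eA)"
    by (simp add: has_bochner_integral_integral_eq[OF be_second_moment[OF i]] has_bochner_integral_integral_eq[OF EA])
  have [measurable]: "be i \<in> borel_measurable (sigma_rest (IDr i))" "A \<in> borel_measurable (sigma_rest (IDr i))"
    by (rule be_measurable_rest[OF i], simp, rule A(2))
  have t2: "has_bochner_integral M (\<lambda>w. cnj (be i w) * A w * cnj (T w)) 0"
    unfolding T by (rule pdr_cross_term[OF i _ sqA' B]) measurable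
  have t3: "has_bochner_integral M (\<lambda>w. T w * cnj (cnj (be i w) * A w)) 0"
    using has_bochner_integral_cnj[OF t2] by (simp add: mult.commute)
  show ?thesis unfolding pw using has_bochner_integral_add[OF has_bochner_integral_add[OF has_bochner_integral_add[OF t1 t2] t3] ET]
    by simp
qed

lemma echo_second_moment:
  assumes i: "i < L"
  shows "has_bochner_integral M (\<lambda>w. echo i w * cnj (echo i w))
     (complex_of_real ((cmod mub)\<^sup>2 + vb) * (trace (MU ** Sth ** adjoint_mat MU ** Sth)
        + complex_of_real ((cmod (trace (MU ** Sth)))\<^sup>2)) + trace (adjoint_mat MU ** Cr ** MU ** Sth))"
  unfolding echo_def[abs_def]
proof (rule second_moment_beta_form[OF i _ _ square_integrable_Txx _ square_integrable_qx _
      Txx_second_moment Trx_second_moment[OF i]])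
  have [measurable]: "x \<in> borel_measurable (sigma_rest (IBeta i))" "x \<in> borel_measurable (sigma_rest (IDr i))"
    by (rule x_measurable_rest, simp)+
  show "Txx \<in> borel_measurable (sigma_rest (IBeta i))" by measurable
  show "Txx \<in> borel_measurable (sigma_rest (IDr i))" by measurable
  show "qx k \<in> borel_measurable (sigma_rest (IDr i))" for k by measurable
qed (simp add: Trx_def)

lemma null_stat_second_moment:
  assumes i: "i < L"
  shows "has_bochner_integral M (\<lambda>w. null_stat i w * cnj (null_stat i w))
     (complex_of_real ((cmod mub)\<^sup>2 + vb) * trace (MU ** Cs ** adjoint_mat MU ** Sth)
      + trace (MU ** Cs ** adjoint_mat MU ** Cr))"
  unfolding null_stat_def[abs_def]
proof (rule second_moment_beta_form[OF i _ _ square_integrable_Txs[OF i] _ square_integrable_qds[OF i] _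
      Txs_second_moment[OF i] Trs_second_moment[OF i]])
  have [measurable]: "x \<in> borel_measurable (sigma_rest (IBeta i))" "x \<in> borel_measurable (sigma_rest (IDr i))"
    "ds i \<in> borel_measurable (sigma_rest (IBeta i))" "ds i \<in> borel_measurable (sigma_rest (IDr i))"
    by (rule x_measurable_rest, simp, rule x_measurable_rest, simp,
        rule ds_measurable_rest[OF i], simp, rule ds_measurable_rest[OF i], simp)
  show "Txs i \<in> borel_measurable (sigma_rest (IBeta i))" by measurable
  show "Txs i \<in> borel_measurable (sigma_rest (IDr i))" by measurable
  show "qds i k \<in> borel_measurable (sigma_rest (IDr i))" for k by measurable
qed (simp add: Trs_def)

lemma stat_measurable_rest:
  assumes j: "j < L" and k: "k \<notin> {IX, IAlpha j, IBeta j, IDr j, IDs j}"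
  shows "stat h j \<in> borel_measurable (sigma_rest k)"
proof -
  have [measurable]: "x \<in> borel_measurable (sigma_rest k)" "al j \<in> borel_measurable (sigma_rest k)"
    "be j \<in> borel_measurable (sigma_rest k)" "dr j \<in> borel_measurable (sigma_rest k)"
    "ds j \<in> borel_measurable (sigma_rest k)"
    using k by (simp_all add: x_measurable_rest al_measurable_rest[OF j] be_measurable_rest[OF j]
        dr_measurable_rest[OF j] ds_measurable_rest[OF j])
  show ?thesis by measurable
qed

lemma stat_mean:
  assumes i: "i < L"
  shows "has_bochner_integral M (stat h i) 0"
proof -
  have pw: "stat h i w = (if h then al i w * echo i w else 0) + (\<Sum>k\<in>UNIV. qds i k w * cnj (pr i k w))" for w
    by (simp add: stat_def null_stat_eq mult.commute)
  have [measurable]: "x \<in> borel_measurable (sigma_rest (IAlpha i))" "be i \<in> borel_measurable (sigma_rest (IAlpha i))"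
    "dr i \<in> borel_measurable (sigma_rest (IAlpha i))" "al i \<in> borel_measurable (sigma_var (IAlpha i))"
    "x \<in> borel_measurable (sigma_rest (IDs i))" "be i \<in> borel_measurable (sigma_rest (IDs i))"
    "dr i \<in> borel_measurable (sigma_rest (IDs i))" "ds i \<in> borel_measurable (sigma_var (IDs i))"
    using i by (simp_all add: x_measurable_rest be_measurable_rest dr_measurable_rest al_measurable_var
        ds_measurable_var)
  have "has_bochner_integral M (\<lambda>w. al i w * echo i w) 0"
    by (rule has_bochner_integral_indep_mult_zero[of "IAlpha i"])
      (simp add: i, measurable, measurable, rule al_mean[OF i],
       rule square_integrable_integrable[OF square_integrable_echo[OF i]])
  hence t1: "has_bochner_integral M (\<lambda>w. if h then al i w * echo i w else 0) 0"
    by (cases h) (simp_all add: has_bochner_integral_zero)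
  have trm: "has_bochner_integral M (\<lambda>w. qds i k w * cnj (pr i k w)) 0" for k
    by (rule has_bochner_integral_indep_mult_zero[of "IDs i"])
      (simp add: i, measurable, measurable, rule qds_mean[OF i],
       rule square_integrable_integrable[OF square_integrable_cnj[OF square_integrable_pr[OF i]]])
  have "has_bochner_integral M (\<lambda>w. \<Sum>k\<in>UNIV. qds i k w * cnj (pr i k w)) (\<Sum>k\<in>(UNIV::'d set). 0)"
    by (intro has_bochner_integral_sum trm)
  from has_bochner_integral_add[OF t1 this] show ?thesis unfolding pw by simp
qed

lemma cvar_stat_H0:
  assumes i: "i < L"
  shows "complex_of_real (cvar M (stat False i))
     = complex_of_real ((cmod mub)\<^sup>2 + vb) * trace (MU ** Cs ** adjoint_mat MU ** Sth)
       + trace (MU ** Cs ** adjoint_mat MU ** Cr)"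
  unfolding cvar_centered[OF stat_mean[OF i]] using null_stat_second_moment[OF i]
  by (simp add: stat_def has_bochner_integral_integral_eq)

lemma cvar_stat_H1:
  assumes i: "i < L"
  shows "complex_of_real (cvar M (stat True i))
     = complex_of_real ((cmod mub)\<^sup>2 + vb) * trace (MU ** Cs ** adjoint_mat MU ** Sth)
       + trace (MU ** Cs ** adjoint_mat MU ** Cr)
       + complex_of_real va * trace (adjoint_mat MU ** Cr ** MU ** Sth)
       + complex_of_real (va * ((cmod mub)\<^sup>2 + vb)) * (trace (MU ** Sth ** adjoint_mat MU ** Sth)
         + complex_of_real ((cmod (trace (MU ** Sth)))\<^sup>2))" (is "_ = ?v")
proof -
  have pw: "stat True i w * cnj (stat True i w) = (al i w * cnj (al i w)) * (echo i w * cnj (echo i w))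
      + al i w * (echo i w * cnj (null_stat i w)) + null_stat i w * cnj (al i w * echo i w)
      + null_stat i w * cnj (null_stat i w)" for w
    by (simp add: stat_def algebra_simps)
  have [measurable]: "x \<in> borel_measurable (sigma_rest (IAlpha i))" "be i \<in> borel_measurable (sigma_rest (IAlpha i))"
    "dr i \<in> borel_measurable (sigma_rest (IAlpha i))" "ds i \<in> borel_measurable (sigma_rest (IAlpha i))"
    "al i \<in> borel_measurable (sigma_var (IAlpha i))"
    using i by (simp_all add: x_measurable_rest be_measurable_rest dr_measurable_rest ds_measurable_rest
        al_measurable_var)
  have "has_bochner_integral M (\<lambda>w. (al i w * cnj (al i w)) * (echo i w * cnj (echo i w)))
      ((\<integral>w. al i w * cnj (al i w) \<partial>M) * (\<integral>w. echo i w * cnj (echo i w) \<partial>M))"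
    by (rule has_bochner_integral_indep_mult[of "IAlpha i"])
      (simp add: i, measurable, measurable, rule integrable.intros[OF al_second_moment[OF i]],
       rule integrable.intros[OF echo_second_moment[OF i]])
  note t1 = this[unfolded has_bochner_integral_integral_eq[OF al_second_moment[OF i]]
      has_bochner_integral_integral_eq[OF echo_second_moment[OF i]]]
  have t2: "has_bochner_integral M (\<lambda>w. al i w * (echo i w * cnj (null_stat i w))) 0"
    by (rule has_bochner_integral_indep_mult_zero[of "IAlpha i"])
      (simp add: i, measurable, measurable, rule al_mean[OF i],
       rule square_integrable_mult_integrable[OF square_integrable_echo[OF i]
         square_integrable_cnj[OF square_integrable_null_stat[OF i]]])
  have t3: "has_bochner_integral M (\<lambda>w. null_stat i w * cnj (al i w * echo i w)) 0"
    using has_bochner_integral_cnj[OF t2] by (simp add: mult_ac)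
  have "has_bochner_integral M (\<lambda>w. stat True i w * cnj (stat True i w)) ?v"
    unfolding pw
    using has_bochner_integral_add[OF has_bochner_integral_add[OF has_bochner_integral_add[OF t1 t2] t3]
        null_stat_second_moment[OF i]]
    by (simp add: algebra_simps)
  thus ?thesis unfolding cvar_centered[OF stat_mean[OF i]] by (rule has_bochner_integral_integral_eq)
qed

lemma stat_cross_moment:
  assumes i: "i < L" and j: "j < L" and ij: "i \<noteq> j"
  shows "has_bochner_integral M (\<lambda>w. stat h i w * cnj (stat h j w)) 0"
proof -
  have pw: "stat h i w * cnj (stat h j w) = (if h then al i w * (echo i w * cnj (stat h j w)) else 0)
      + (\<Sum>k\<in>UNIV. qds i k w * (cnj (pr i k w) * cnj (stat h j w)))" for w
    by (cases h) (simp_all add: stat_def[of _ i] null_stat_eq sum_distrib_left distrib_left distrib_right mult_ac)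
  have [measurable]: "x \<in> borel_measurable (sigma_rest (IAlpha i))" "be i \<in> borel_measurable (sigma_rest (IAlpha i))"
    "dr i \<in> borel_measurable (sigma_rest (IAlpha i))" "al i \<in> borel_measurable (sigma_var (IAlpha i))"
    "x \<in> borel_measurable (sigma_rest (IDs i))" "be i \<in> borel_measurable (sigma_rest (IDs i))"
    "dr i \<in> borel_measurable (sigma_rest (IDs i))" "ds i \<in> borel_measurable (sigma_var (IDs i))"
    "stat h j \<in> borel_measurable (sigma_rest (IAlpha i))" "stat h j \<in> borel_measurable (sigma_rest (IDs i))"
    using i j ij by (simp_all add: x_measurable_rest be_measurable_rest dr_measurable_rest al_measurable_var
        ds_measurable_var stat_measurable_rest)
  have "has_bochner_integral M (\<lambda>w. al i w * (echo i w * cnj (stat h j w))) 0"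
    by (rule has_bochner_integral_indep_mult_zero[of "IAlpha i"])
      (simp add: i, measurable, measurable, rule al_mean[OF i],
       rule square_integrable_mult_integrable[OF square_integrable_echo[OF i]
         square_integrable_cnj[OF square_integrable_stat[OF j]]])
  hence t1: "has_bochner_integral M (\<lambda>w. if h then al i w * (echo i w * cnj (stat h j w)) else 0) 0"
    by (cases h) (simp_all add: has_bochner_integral_zero)
  have trm: "has_bochner_integral M (\<lambda>w. qds i k w * (cnj (pr i k w) * cnj (stat h j w))) 0" for k
    by (rule has_bochner_integral_indep_mult_zero[of "IDs i"])
      (simp add: i, measurable, measurable, rule qds_mean[OF i],
       rule square_integrable_mult_integrable[OF square_integrable_cnj[OF square_integrable_pr[OF i]]
         square_integrable_cnj[OF square_integrable_stat[OF j]]])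
  have "has_bochner_integral M (\<lambda>w. \<Sum>k\<in>UNIV. qds i k w * (cnj (pr i k w) * cnj (stat h j w))) (\<Sum>k\<in>(UNIV::'d set). 0)"
    by (intro has_bochner_integral_sum trm)
  from has_bochner_integral_add[OF t1 this] show ?thesis unfolding pw by simp
qed

lemma ccov_stat:
  assumes "i < L" "j < L" "i \<noteq> j"
  shows "ccov M (stat h i) (stat h j) = 0"
  unfolding ccov_centered[OF stat_mean[OF assms(1)] stat_mean[OF assms(2)]]
  by (rule has_bochner_integral_integral_eq[OF stat_cross_moment[OF assms]])

end

theorem proposition1:
  fixes M :: "'w measure" and L :: nat
    and U :: "complex^'d^'n" and Sth :: "complex^'d^'d"
    and Sr Ss :: "complex^'n^'n"
    and va vb :: real and mub :: complex
    and x :: "'w \<Rightarrow> complex^'n"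
    and al be :: "nat \<Rightarrow> 'w \<Rightarrow> complex"
    and dr ds :: "nat \<Rightarrow> 'w \<Rightarrow> complex^'n"
  assumes "prob_space M"
    and "full_column_rank U"
    and "hermitian Sth" and "pos_semidef Sth"
    and "pos_def Sr" and "pos_def Ss"
    and "va \<ge> 0" and "vb \<ge> 0"
    and "is_CN M x 0 (U ** Sth ** adjoint_mat U)"
    and "\<And>i. i < L \<Longrightarrow> is_CN1 M (al i) 0 va"
    and "\<And>i. i < L \<Longrightarrow> is_CN1 M (be i) mub vb"
    and "\<And>i. i < L \<Longrightarrow> is_CN M (dr i) 0 Sr"
    and "\<And>i. i < L \<Longrightarrow> is_CN M (ds i) 0 Ss"
    and "model_indep M L x al be dr ds"
  defines "c \<equiv> \<lambda>h i w. c_stat U Sr Ss (meas_r x be dr i w) (meas_s h x al ds i w)"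
    and "s0 \<equiv> (complex_of_real ((cmod mub)\<^sup>2 + vb)) * trace ((M_U U Sr Ss) ** C_mat U Ss ** adjoint_mat (M_U U Sr Ss) ** Sth)
              + trace ((M_U U Sr Ss) ** C_mat U Ss ** adjoint_mat (M_U U Sr Ss) ** C_mat U Sr)"
  shows "(\<forall>i<L. complex_of_real (cvar M (c False i)) = s0)
     \<and> (\<forall>i<L. complex_of_real (cvar M (c True i)) =
           s0 + complex_of_real va * trace (adjoint_mat (M_U U Sr Ss) ** C_mat U Sr ** (M_U U Sr Ss) ** Sth)
              + complex_of_real (va * ((cmod mub)\<^sup>2 + vb)) *
                  (trace ((M_U U Sr Ss) ** Sth ** adjoint_mat (M_U U Sr Ss) ** Sth)
                   + complex_of_real ((cmod (trace ((M_U U Sr Ss) ** Sth)))\<^sup>2)))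
     \<and> (\<forall>h. \<forall>i<L. \<forall>j<L. i \<noteq> j \<longrightarrow> ccov M (c h i) (c h j) = 0)"
proof -
  interpret detector_model M L U Sth Sr Ss va vb mub x al be dr ds
    by (rule detector_model.intro) (use assms in auto)
  have c: "c h i = stat h i" for h i
    by (rule ext) (simp add: c_def c_stat_eq_stat)
  have s0: "s0 = complex_of_real ((cmod mub)\<^sup>2 + vb) * trace (MU ** Cs ** adjoint_mat MU ** Sth)
      + trace (MU ** Cs ** adjoint_mat MU ** Cr)"
    by (simp add: s0_def MU_def Cs_def Cr_def)
  show ?thesis
    unfolding c s0 MU_def[symmetric] Cr_def[symmetric] using cvar_stat_H0 cvar_stat_H1 ccov_stat by blast
qed

end
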